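(* Let $A>0$. There exists a constant $R_A$ depending only on $A$ such that for every Sawtooth model with $n\ge2$ upper particles (so at least four particles) with $\int_0^1f_1=\int_0^1g_1=1$ and $\max(\|f_1\|_\infty,\|g_1\|_\infty)\le A$, and every event $\mathcal X$ of positive probability in the $\sigma$-algebra generated by $\{X_{i+1},Y_i\}_{i\ge2}$ (as well as for conditioning on $Y_2=y_2$, $y_2\in(0,1]$), the conditional density $d_{X_I\mid\mathcal X}$ is differentiable with $\|(d_{X_I\mid\mathcal X})'\|_\infty\le R_A$.
   Context: A (type $--$) Sawtooth model with $n\ge1$ upper particles is specified by functions $f_1,g_1,\dots,f_n,g_n:[0,1]\to[0,\infty)$, each nondecreasing, $C^1$ and not identically zero. It is the probability space $[0,1]^{n+1}\times[0,1]^n$ with probability density at $(x_1,\dots,x_{n+1},y_1,\dots,y_n)$ equal to $\frac{1}{\mathcal V}\prod_{i=1}^n\mathbf 1_{\{x_i\le y_i\}}\mathbf 1_{\{x_{i+1}\le y_i\}}f_i(y_i-x_i)\,g_i(y_i-x_{i+1})$, $\mathcal V$ being the normalizing constant; lower particles $X_1,\dots,X_{n+1}$, upper particles $Y_1,\dots,Y_n$, $X_I:=X_1$. Conditional densities are computed from the joint density. *)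

theory Defs
  imports "HOL-Analysis.Analysis"
begin

text \<open>Sawtooth model (type --) with n upper particles.
  Lower particles x 1, ..., x (n+1), upper particles y 1, ..., y n.
  Configurations are pairs (x, y) of extensional functions.\<close>

definition C1_on01 :: "(real \<Rightarrow> real) \<Rightarrow> bool" where
  "C1_on01 h \<longleftrightarrow> (\<exists>h'. continuous_on {0..1} h' \<and>
      (\<forall>t\<in>{0..1}. (h has_real_derivative h' t) (at t within {0..1})))"

definition sawtooth_admissible ::
  "nat \<Rightarrow> (nat \<Rightarrow> real \<Rightarrow> real) \<Rightarrow> (nat \<Rightarrow> real \<Rightarrow> real) \<Rightarrow> bool" where
  "sawtooth_admissible n f g \<longleftrightarrow> n \<ge> 1 \<and>
     (\<forall>i\<in>{1..n}. mono_on {0..1} (f i) \<and> mono_on {0..1} (g i)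
        \<and> (\<forall>t\<in>{0..1}. f i t \<ge> 0 \<and> g i t \<ge> 0)
        \<and> C1_on01 (f i) \<and> C1_on01 (g i)
        \<and> (\<exists>t\<in>{0..1}. f i t \<noteq> 0) \<and> (\<exists>t\<in>{0..1}. g i t \<noteq> 0))"

definition saw_weight ::
  "nat \<Rightarrow> (nat \<Rightarrow> real \<Rightarrow> real) \<Rightarrow> (nat \<Rightarrow> real \<Rightarrow> real) \<Rightarrow>
   (nat \<Rightarrow> real) \<Rightarrow> (nat \<Rightarrow> real) \<Rightarrow> real" where
  "saw_weight n f g x y =
     (\<Prod>i\<in>{1..n+1}. indicator {0..1} (x i)) *
     (\<Prod>i\<in>{1..n}. indicator {0..1} (y i)
        * (if x i \<le> y i then 1 else 0) * (if x (Suc i) \<le> y i then 1 else 0)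
        * f i (y i - x i) * g i (y i - x (Suc i)))"

definition saw_base :: "nat \<Rightarrow> ((nat \<Rightarrow> real) \<times> (nat \<Rightarrow> real)) measure" where
  "saw_base n = pair_measure (PiM {1..n+1} (\<lambda>_. lborel)) (PiM {1..n} (\<lambda>_. lborel))"

definition saw_normalizer ::
  "nat \<Rightarrow> (nat \<Rightarrow> real \<Rightarrow> real) \<Rightarrow> (nat \<Rightarrow> real \<Rightarrow> real) \<Rightarrow> real" where
  "saw_normalizer n f g = (LINT z|saw_base n. saw_weight n f g (fst z) (snd z))"

definition saw_prob ::
  "nat \<Rightarrow> (nat \<Rightarrow> real \<Rightarrow> real) \<Rightarrow> (nat \<Rightarrow> real \<Rightarrow> real) \<Rightarrow>
   ((nat \<Rightarrow> real) \<times> (nat \<Rightarrow> real)) measure" where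
  "saw_prob n f g = density (saw_base n)
     (\<lambda>z. ennreal (saw_weight n f g (fst z) (snd z) / saw_normalizer n f g))"

text \<open>The random vector (X_3,...,X_{n+1}, Y_2,...,Y_n), i.e. {X_{i+1}, Y_i}_{i>=2}.\<close>
definition saw_rest :: "nat \<Rightarrow> (nat \<Rightarrow> real) \<times> (nat \<Rightarrow> real) \<Rightarrow>
    (nat \<Rightarrow> real) \<times> (nat \<Rightarrow> real)" where
  "saw_rest n z = (restrict (fst z) {3..n+1}, restrict (snd z) {2..n})"

definition saw_rest_space :: "nat \<Rightarrow> ((nat \<Rightarrow> real) \<times> (nat \<Rightarrow> real)) measure" where
  "saw_rest_space n = pair_measure (PiM {3..n+1} (\<lambda>_. lborel)) (PiM {2..n} (\<lambda>_. lborel))"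

text \<open>The event {(X_3,..,X_{n+1},Y_2,..,Y_n) in B}; these are exactly the events of the
  sigma-algebra generated by {X_{i+1}, Y_i}_{i>=2}.\<close>
definition saw_event :: "nat \<Rightarrow> ((nat \<Rightarrow> real) \<times> (nat \<Rightarrow> real)) set \<Rightarrow>
    ((nat \<Rightarrow> real) \<times> (nat \<Rightarrow> real)) set" where
  "saw_event n B = {z \<in> space (saw_base n). saw_rest n z \<in> B}"

text \<open>Conditional density of X_1 given an event E, computed from the joint density:
  integrate the joint density times the indicator of E over all coordinates except x 1,
  and divide by the integral over all coordinates (the normaliser cancels).\<close>
definition cond_dens_X1 ::
  "nat \<Rightarrow> (nat \<Rightarrow> real \<Rightarrow> real) \<Rightarrow> (nat \<Rightarrow> real \<Rightarrow> real) \<Rightarrow>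
   ((nat \<Rightarrow> real) \<times> (nat \<Rightarrow> real)) set \<Rightarrow> real \<Rightarrow> real" where
  "cond_dens_X1 n f g E t =
     (LINT z|pair_measure (PiM {2..n+1} (\<lambda>_. lborel)) (PiM {1..n} (\<lambda>_. lborel)).
        saw_weight n f g ((fst z)(1 := t)) (snd z) * indicator E ((fst z)(1 := t), snd z))
     / (LINT z|saw_base n. saw_weight n f g (fst z) (snd z) * indicator E z)"

definition cond_dens_X1_Y2 ::
  "nat \<Rightarrow> (nat \<Rightarrow> real \<Rightarrow> real) \<Rightarrow> (nat \<Rightarrow> real \<Rightarrow> real) \<Rightarrow> real \<Rightarrow> real \<Rightarrow> real" where
  "cond_dens_X1_Y2 n f g s t =
     (LINT z|pair_measure (PiM {2..n+1} (\<lambda>_. lborel)) (PiM ({1..n} - {2}) (\<lambda>_. lborel)).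
        saw_weight n f g ((fst z)(1 := t)) ((snd z)(2 := s)))
     / (LINT z|pair_measure (PiM {1..n+1} (\<lambda>_. lborel)) (PiM ({1..n} - {2}) (\<lambda>_. lborel)).
        saw_weight n f g (fst z) ((snd z)(2 := s)))"

end

theory Submission
  imports Defs
begin

text \<open>Conditioning on an event that involves only \<open>x\<^sub>3, \<dots>, x\<^sub>n\<^sub>+\<^sub>1, y\<^sub>2, \<dots>, y\<^sub>n\<close>, or on
  \<open>y\<^sub>2 = s\<close>, leaves a joint weight of the form \<open>f\<^sub>1(y\<^sub>1 - x\<^sub>1) g\<^sub>1(y\<^sub>1 - x\<^sub>2) U\<close>, where \<open>U\<close> does not
  depend on \<open>x\<^sub>1, y\<^sub>1\<close> and is nonincreasing in \<open>x\<^sub>2\<close> because \<open>f\<^sub>2\<close> is nondecreasing. Integrating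
  \<open>U\<close> over the other particles gives a bounded nonincreasing function \<open>S\<close> of \<open>x\<^sub>2\<close>, and the
  unnormalised density of \<open>X\<^sub>1\<close> becomes \<open>N(t) = \<integral>\<^sub>t\<^sup>1 f\<^sub>1(y - t) H(y) dy\<close> with
  \<open>H(y) = \<integral>\<^sub>0\<^sup>y g\<^sub>1(y - x) S(x) dx\<close>. Differentiating under the integral sign gives
  \<open>|N'| \<le> 2A\<^sup>2 \<integral>S\<close>. On the other hand \<open>\<integral>N \<ge> \<integral>S / (256 A\<^sup>3)\<close>: a nondecreasing density bounded
  by \<open>A\<close> is at least \<open>1/2\<close> on \<open>[1 - 1/(2A), 1]\<close>, and \<open>S\<close> puts at least the fraction
  \<open>\<delta> = 1/(4A)\<close> of its mass on \<open>[0, \<delta>]\<close>. Hence \<open>R\<^sub>A = 512 A\<^sup>5\<close> works.\<close>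

section \<open>Functions on the unit interval\<close>

text \<open>The \<open>f\<^sub>i, g\<^sub>i\<close> are only assumed regular on \<open>[0,1]\<close>. Extending them by constants gives
  continuous Borel functions on \<open>\<real>\<close> without changing the Sawtooth weight, which only
  evaluates them on \<open>[0,1]\<close>.\<close>

definition clamp01 :: "(real \<Rightarrow> real) \<Rightarrow> real \<Rightarrow> real" where
  "clamp01 h u = h (max 0 (min 1 u))"

lemma clamp01_eq [simp]: "u \<in> {0..1} \<Longrightarrow> clamp01 h u = h u"
  by (simp add: clamp01_def)

lemma continuous_on_clamp01:
  assumes "continuous_on {0..1} h"
  shows "continuous_on UNIV (clamp01 h)"
proof -
  have "continuous_on UNIV (\<lambda>u::real. max 0 (min 1 u))" by (intro continuous_intros)
  moreover have "(\<lambda>u::real. max 0 (min 1 u)) ` UNIV \<subseteq> {0..1}" by auto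
  ultimately show ?thesis
    unfolding clamp01_def using continuous_on_compose2[OF assms] by blast
qed

lemma clamp01_borel_measurable: "continuous_on {0..1} h \<Longrightarrow> clamp01 h \<in> borel_measurable borel"
  using continuous_on_clamp01 borel_measurable_continuous_onI by blast

lemma mono_clamp01: "mono_on {0..1} h \<Longrightarrow> mono (clamp01 h)"
  unfolding clamp01_def mono_def mono_on_def by auto

lemma clamp01_nonneg: "\<forall>t\<in>{0..1}. 0 \<le> h t \<Longrightarrow> 0 \<le> clamp01 h u"
  unfolding clamp01_def by auto

lemma clamp01_abs_le: "\<forall>t\<in>{0..1}. \<bar>h t\<bar> \<le> A \<Longrightarrow> \<bar>clamp01 h u\<bar> \<le> A"
  unfolding clamp01_def by auto

lemma clamp01_le_at_1: "mono_on {0..1} h \<Longrightarrow> clamp01 h u \<le> h 1"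
  unfolding clamp01_def mono_on_def by auto

lemma C1_on01_continuous_on: "C1_on01 h \<Longrightarrow> continuous_on {0..1} h"
  unfolding C1_on01_def by (metis DERIV_continuous continuous_on_eq_continuous_within)

lemma mono_on_has_real_derivative_nonneg:
  assumes "mono_on {0..1} h" and "(h has_real_derivative D) (at t within {0..1})"
    and "t \<in> {0..1}"
  shows "0 \<le> D"
proof -
  have lim: "((\<lambda>y. (h y - h t) / (y - t)) \<longlongrightarrow> D) (at t within {0..1})"
    using assms(2) by (simp add: has_field_derivative_iff)
  have "at t within {0..1::real} \<noteq> bot"
    using assms(3) by (auto simp: trivial_limit_within islimpt_Icc)
  moreover have "\<forall>\<^sub>F y in at t within {0..1}. 0 \<le> (h y - h t) / (y - t)"
    unfolding eventually_at_filter
  proof (rule always_eventually, intro allI impI)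
    fix y assume "y \<noteq> t" "y \<in> {0..1::real}"
    then show "0 \<le> (h y - h t) / (y - t)"
      using assms(1,3) unfolding mono_on_def
      by (cases "y < t") (auto simp: zero_le_divide_iff)
  qed
  ultimately show ?thesis using tendsto_lowerbound[OF lim] by blast
qed

lemma abs_integral_le_const:
  fixes h :: "real \<Rightarrow> real"
  assumes "h integrable_on {a..b}" "a \<le> b" "\<And>x. x \<in> {a..b} \<Longrightarrow> \<bar>h x\<bar> \<le> B"
  shows "\<bar>integral {a..b} h\<bar> \<le> (b - a) * B"
proof -
  have "norm (integral {a..b} h) \<le> integral {a..b} (\<lambda>_::real. B)"
    by (rule integral_norm_bound_integral[OF assms(1) integrable_continuous_real[OF continuous_on_const]])
       (use assms(3) in auto)
  then show ?thesis using assms(2) by (simp add: mult.commute)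
qed

text \<open>With \<open>c = 1 - 1/(2A)\<close>: the mass on \<open>[c,1]\<close> is at most \<open>A(1 - c) = 1/2\<close>, and by monotonicity
  \<open>h c \<ge> \<integral>\<^sub>0\<^sup>c h \<ge> 1/2\<close>.\<close>

lemma mono_on_density_ge_half:
  fixes h :: "real \<Rightarrow> real"
  assumes mono: "mono_on {0..1} h" and nonneg: "\<forall>t\<in>{0..1}. 0 \<le> h t"
    and bound: "\<forall>t\<in>{0..1}. \<bar>h t\<bar> \<le> A" and cont: "continuous_on {0..1} h"
    and total: "integral {0..1} h = 1" and "1 \<le> A"
  shows "1 / 2 \<le> h (1 - 1 / (2 * A))"
proof -
  define c where "c = 1 - 1 / (2 * A)"
  have c: "1/2 \<le> c" "c \<le> 1" using \<open>1 \<le> A\<close> by (auto simp: c_def field_simps)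
  have int: "h integrable_on {0..1}" by (rule integrable_continuous_real[OF cont])
  have split: "integral {0..c} h + integral {c..1} h = 1"
    using Henstock_Kurzweil_Integration.integral_combine[OF _ _ int, of c] c total by auto
  have "integral {c..1} h \<le> integral {c..1} (\<lambda>_::real. A)"
    by (rule integral_le) (use integrable_subinterval_real[OF int, of c 1] c bound in \<open>auto simp: abs_le_iff\<close>)
  also have "\<dots> = 1/2" using c \<open>1 \<le> A\<close> by (simp add: c_def field_simps)
  finally have upper: "integral {c..1} h \<le> 1/2" .
  have "integral {0..c} h \<le> integral {0..c} (\<lambda>_::real. h c)"
    by (rule integral_le) (use integrable_subinterval_real[OF int, of 0 c] c mono in \<open>auto simp: mono_on_def\<close>)
  also have "\<dots> \<le> h c" using c nonneg by (simp add: mult_left_le_one_le)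
  finally have "integral {0..c} h \<le> h c" .
  with split upper show ?thesis by (simp add: c_def)
qed

text \<open>Extension of a \<open>C\<^sup>1\<close> function on \<open>[0,1]\<close> to the left by its tangent line at \<open>0\<close>; it keeps a
  continuous derivative on \<open>[-1,1]\<close>, which is what differentiation under the integral sign needs.\<close>

definition lin_ext :: "(real \<Rightarrow> real) \<Rightarrow> (real \<Rightarrow> real) \<Rightarrow> real \<Rightarrow> real" where
  "lin_ext h h' u = (if u < 0 then h 0 + h' 0 * u else h u)"

definition lin_ext_deriv :: "(real \<Rightarrow> real) \<Rightarrow> real \<Rightarrow> real" where
  "lin_ext_deriv h' u = (if u < 0 then h' 0 else h' u)"

lemma lin_ext_eq: "0 \<le> u \<Longrightarrow> lin_ext h h' u = h u"
  by (simp add: lin_ext_def)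

lemma lin_ext_deriv_eq: "0 \<le> u \<Longrightarrow> lin_ext_deriv h' u = h' u"
  by (simp add: lin_ext_deriv_def)

lemma has_real_derivative_lin_ext:
  assumes deriv: "\<forall>t\<in>{0..1}. (h has_real_derivative h' t) (at t within {0..1})"
    and u: "u \<in> {-1..1}"
  shows "(lin_ext h h' has_real_derivative lin_ext_deriv h' u) (at u within {-1..1})"
proof -
  let ?q = "\<lambda>y. (lin_ext h h' y - lin_ext h h' u) / (y - u)"
  have right: "(?q \<longlongrightarrow> lin_ext_deriv h' u) (at u within {0..1})"
  proof (cases "u < 0")
    case True
    then have "at u within {0..1} = bot" by (auto simp: trivial_limit_within islimpt_Icc)
    then show ?thesis by simp
  next
    case False
    then have "((\<lambda>y. (h y - h u) / (y - u)) \<longlongrightarrow> h' u) (at u within {0..1})"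
      using deriv u by (simp add: has_field_derivative_iff)
    from Lim_transform_within[OF this, where d=1] show ?thesis
      using False by (auto simp: lin_ext_def lin_ext_deriv_def)
  qed
  have left: "(?q \<longlongrightarrow> lin_ext_deriv h' u) (at u within {-1..0})"
  proof (cases "u > 0")
    case True
    then have "at u within {-1..0} = bot" by (auto simp: trivial_limit_within islimpt_Icc)
    then show ?thesis by simp
  next
    case False
    have "((\<lambda>y. h' 0) \<longlongrightarrow> lin_ext_deriv h' u) (at u within {-1..0})"
      using False by (auto simp: lin_ext_deriv_def)
    then show ?thesis
    proof (rule Lim_transform_within[OF _ zero_less_one])
      fix y assume "y \<in> {-1..0}" "0 < dist y u"
      then show "h' 0 = ?q y" using False by (auto simp: lin_ext_def field_simps)
    qed
  qed
  have "{-1..1::real} = {-1..0} \<union> {0..1}" by auto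
  with left right show ?thesis by (simp add: has_field_derivative_iff Lim_within_Un)
qed

lemma continuous_on_lin_ext:
  "\<forall>t\<in>{0..1}. (h has_real_derivative h' t) (at t within {0..1}) \<Longrightarrow> continuous_on {-1..1} (lin_ext h h')"
  using has_real_derivative_lin_ext by (metis DERIV_continuous continuous_on_eq_continuous_within)

lemma continuous_on_lin_ext_deriv:
  assumes "continuous_on {0..1} h'"
  shows "continuous_on {-1..1} (lin_ext_deriv h')"
proof -
  have "continuous_on {-1..1} (\<lambda>u. h' (max 0 u))"
    by (rule continuous_on_compose2[OF assms]) (auto intro!: continuous_intros)
  moreover have "\<And>u. h' (max 0 u) = lin_ext_deriv h' u"
    by (auto simp: lin_ext_deriv_def max_def)
  ultimately show ?thesis by simp
qed

lemma has_real_derivative_lin_ext_diff: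
  assumes "\<forall>t\<in>{0..1}. (h has_real_derivative h' t) (at t within {0..1})"
    and y: "y \<in> {0..1}" and a: "a \<in> {0..1}"
  shows "((\<lambda>a. lin_ext h h' (y - a)) has_real_derivative - lin_ext_deriv h' (y - a)) (at a within {0..1})"
proof -
  have inner: "((\<lambda>a. y - a) has_real_derivative -1) (at a within {0..1})"
    by (auto intro!: derivative_eq_intros)
  have "(lin_ext h h' has_real_derivative lin_ext_deriv h' (y - a)) (at (y - a) within {-1..1})"
    using has_real_derivative_lin_ext[OF assms(1)] y a by auto
  then have "(lin_ext h h' has_real_derivative lin_ext_deriv h' (y - a)) (at (y - a) within (\<lambda>a. y - a) ` {0..1})"
    by (rule DERIV_subset) (use y in auto)
  from DERIV_image_chain[OF this inner] show ?thesis by (simp add: o_def)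
qed

section \<open>The first tooth\<close>

text \<open>The factor of the Sawtooth weight involving \<open>x\<^sub>1 = t\<close>, \<open>x\<^sub>2 = a\<close> and \<open>y\<^sub>1 = b\<close>.\<close>

definition tooth_weight :: "(real \<Rightarrow> real) \<Rightarrow> (real \<Rightarrow> real) \<Rightarrow> real \<Rightarrow> real \<Rightarrow> real \<Rightarrow> real" where
  "tooth_weight f g t a b = indicator {0..1} t * indicator {0..1} a * indicator {0..1} b
     * (if t \<le> b then 1 else 0) * (if a \<le> b then 1 else 0) * f (b - t) * g (b - a)"

definition tooth_marginal ::
  "(real \<Rightarrow> real) \<Rightarrow> (real \<Rightarrow> real) \<Rightarrow> (real \<Rightarrow> real) \<Rightarrow> real \<Rightarrow> ennreal" where
  "tooth_marginal f g S t =
     (\<integral>\<^sup>+ a. ennreal (S a) * (\<integral>\<^sup>+ b. ennreal (tooth_weight f g t a b) \<partial>lborel) \<partial>lborel)"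

lemma tooth_weight_clamp01: "tooth_weight f g t a b = tooth_weight (clamp01 f) (clamp01 g) t a b"
  by (auto simp: tooth_weight_def indicator_def)

locale tooth_pair =
  fixes f g :: "real \<Rightarrow> real" and A :: real
  assumes f_mono: "mono_on {0..1} f" and g_mono: "mono_on {0..1} g"
    and f_nonneg: "\<forall>t\<in>{0..1}. 0 \<le> f t" and g_nonneg: "\<forall>t\<in>{0..1}. 0 \<le> g t"
    and f_C1: "C1_on01 f" and g_C1: "C1_on01 g"
    and f_integral: "integral {0..1} f = 1" and g_integral: "integral {0..1} g = 1"
    and f_bound: "\<forall>t\<in>{0..1}. \<bar>f t\<bar> \<le> A" and g_bound: "\<forall>t\<in>{0..1}. \<bar>g t\<bar> \<le> A"
begin

definition f' :: "real \<Rightarrow> real" where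
  "f' = (SOME h'. continuous_on {0..1} h' \<and> (\<forall>t\<in>{0..1}. (f has_real_derivative h' t) (at t within {0..1})))"

lemma continuous_on_f': "continuous_on {0..1} f'"
  and has_real_derivative_f: "\<forall>t\<in>{0..1}. (f has_real_derivative f' t) (at t within {0..1})"
  using someI_ex[OF f_C1[unfolded C1_on01_def]] unfolding f'_def by blast+

lemma f'_nonneg: "t \<in> {0..1} \<Longrightarrow> 0 \<le> f' t"
  using mono_on_has_real_derivative_nonneg[OF f_mono] has_real_derivative_f by blast

lemma f_continuous: "continuous_on {0..1} f"
  by (rule C1_on01_continuous_on[OF f_C1])

lemma g_continuous: "continuous_on {0..1} g"
  by (rule C1_on01_continuous_on[OF g_C1])

abbreviation "fc \<equiv> clamp01 f"
abbreviation "gc \<equiv> clamp01 g"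

lemma fc_continuous: "continuous_on UNIV fc" by (rule continuous_on_clamp01[OF f_continuous])
lemma gc_continuous: "continuous_on UNIV gc" by (rule continuous_on_clamp01[OF g_continuous])
lemma fc_nonneg: "0 \<le> fc u" by (rule clamp01_nonneg[OF f_nonneg])
lemma gc_nonneg: "0 \<le> gc u" by (rule clamp01_nonneg[OF g_nonneg])
lemma gc_le_A: "gc u \<le> A" using clamp01_abs_le[OF g_bound, of u] by simp
lemma fc_mono: "u \<le> v \<Longrightarrow> fc u \<le> fc v" using mono_clamp01[OF f_mono] by (simp add: mono_def)
lemma gc_mono: "u \<le> v \<Longrightarrow> gc u \<le> gc v" using mono_clamp01[OF g_mono] by (simp add: mono_def)

lemma tooth_weight_clamp01_nonneg: "0 \<le> tooth_weight fc gc t a b"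
  unfolding tooth_weight_def using fc_nonneg gc_nonneg by (auto simp: indicator_def)

lemma tooth_weight_nonneg: "0 \<le> tooth_weight f g t a b"
  by (subst tooth_weight_clamp01) (rule tooth_weight_clamp01_nonneg)

lemma tooth_weight_borel_measurable:
  "(\<lambda>(a, b). tooth_weight f g t a b) \<in> borel_measurable (lborel \<Otimes>\<^sub>M lborel)"
proof -
  have [measurable]: "fc \<in> borel_measurable borel" "gc \<in> borel_measurable borel"
    using clamp01_borel_measurable f_continuous g_continuous by blast+
  show ?thesis by (subst tooth_weight_clamp01) (unfold tooth_weight_def, measurable)
qed

lemma one_le_A: "1 \<le> A"
proof -
  have "integral {0..1} f \<le> integral {0..1} (\<lambda>_::real. A)"
    by (rule integral_le[OF integrable_continuous_real[OF f_continuous]])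
       (use f_bound in \<open>auto simp: abs_le_iff\<close>)
  then show ?thesis using f_integral by simp
qed

definition \<delta> :: real where "\<delta> = 1 / (4 * A)"

lemma delta_bounds: "0 < \<delta>" "\<delta> \<le> 1/4"
  using one_le_A by (auto simp: \<delta>_def field_simps)

lemma f_ge_half: "1/2 \<le> f (1 - 2 * \<delta>)"
  and g_ge_half: "1/2 \<le> g (1 - 2 * \<delta>)"
  using mono_on_density_ge_half[OF f_mono f_nonneg f_bound f_continuous f_integral one_le_A]
    mono_on_density_ge_half[OF g_mono g_nonneg g_bound g_continuous g_integral one_le_A]
  by (simp_all add: \<delta>_def)

end

text \<open>\<open>S a\<close> is the (unnormalised) weight of all other particles given \<open>x\<^sub>2 = a\<close>. It is
  nonincreasing in \<open>a\<close> because \<open>f\<^sub>2\<close> is nondecreasing; this is what makes the mass of \<open>S\<close>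
  comparable to its mass near \<open>0\<close>.\<close>

locale first_tooth = tooth_pair +
  fixes S :: "real \<Rightarrow> real" and C :: real
  assumes S_borel: "S \<in> borel_measurable borel"
    and S_nonneg: "\<And>x. 0 \<le> S x" and S_le: "\<And>x. S x \<le> C"
    and S_antitone: "\<And>a b. a \<le> b \<Longrightarrow> S b \<le> S a"
begin

lemma C_nonneg: "0 \<le> C" using S_nonneg[of 0] S_le[of 0] by simp

lemma gc_S_nonneg: "0 \<le> gc u * S x"
  and gc_S_le: "gc u * S x \<le> A * C"
  using gc_nonneg gc_le_A S_nonneg S_le one_le_A by (auto intro: mult_mono)

lemma integrable_S: "S integrable_on {a..b}"
proof -
  have "mono_on {a..b} (\<lambda>x. - S x)" unfolding mono_on_def using S_antitone by auto
  then have "(\<lambda>x. - S x) integrable_on {a..b}" by (rule integrable_on_mono_on)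
  then show ?thesis using integrable_neg by fastforce
qed

lemma integrable_gc_S: "(\<lambda>x. gc (c - x) * S x) integrable_on {a..b}"
proof -
  have [measurable]: "gc \<in> borel_measurable borel"
    by (rule clamp01_borel_measurable[OF g_continuous])
  have "integrable lborel (\<lambda>x. indicator {a..b} x *\<^sub>R (gc (c - x) * S x))"
  proof (rule integrableI_bounded_set_indicator[where B="A * C"])
    show "(\<lambda>x. gc (c - x) * S x) \<in> borel_measurable lborel" using S_borel by measurable
    show "AE x in lborel. x \<in> {a..b} \<longrightarrow> norm (gc (c - x) * S x) \<le> A * C"
      using gc_S_nonneg gc_S_le by (intro AE_I2) simp
  qed (auto simp: emeasure_lborel_Icc_eq)
  then show ?thesis
    by (intro set_borel_integral_eq_integral(1)) (simp add: set_integrable_def)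
qed

definition m :: real where "m = integral {0..1} S"

definition H :: "real \<Rightarrow> real" where "H y = integral {0..y} (\<lambda>x. gc (y - x) * S x)"

lemma m_nonneg: "0 \<le> m"
  unfolding m_def using integrable_S S_nonneg by (intro integral_nonneg) auto

lemma H_nonneg: "0 \<le> H y"
  unfolding H_def using integrable_gc_S gc_nonneg S_nonneg by (intro integral_nonneg) auto

lemma H_le_A_m: "y \<in> {0..1} \<Longrightarrow> H y \<le> A * m"
proof -
  assume y: "y \<in> {0..1}"
  have "H y \<le> integral {0..y} (\<lambda>x. A * S x)" unfolding H_def
    using integrable_gc_S integrable_S gc_le_A S_nonneg
    by (intro integral_le integrable_on_mult_right) (auto intro!: mult_right_mono)
  also have "\<dots> \<le> integral {0..1} (\<lambda>x. A * S x)"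
    using y integrable_S S_nonneg one_le_A by (intro integral_subset_le integrable_on_mult_right) auto
  finally show ?thesis unfolding m_def by simp
qed

lemma H_increment:
  assumes "0 \<le> u" "u \<le> v"
  shows "H v - H u = integral {0..u} (\<lambda>x. (gc (v - x) - gc (u - x)) * S x)
                    + integral {u..v} (\<lambda>x. gc (v - x) * S x)"
proof -
  have "H v = integral {0..u} (\<lambda>x. gc (v - x) * S x) + integral {u..v} (\<lambda>x. gc (v - x) * S x)"
    unfolding H_def
    by (rule Henstock_Kurzweil_Integration.integral_combine[symmetric]) (use assms integrable_gc_S in auto)
  moreover have "integral {0..u} (\<lambda>x. (gc (v - x) - gc (u - x)) * S x)
      = integral {0..u} (\<lambda>x. gc (v - x) * S x) - integral {0..u} (\<lambda>x. gc (u - x) * S x)"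
    by (subst integral_diff[symmetric]) (auto intro!: integrable_gc_S integral_cong simp: left_diff_distrib)
  ultimately show ?thesis unfolding H_def by simp
qed

lemma abs_H_increment_le:
  assumes uv: "0 \<le> u" "u \<le> v" and e: "0 \<le> e" and close: "\<And>x. x \<in> {0..u} \<Longrightarrow> \<bar>gc (v - x) - gc (u - x)\<bar> \<le> e"
  shows "\<bar>H v - H u\<bar> \<le> u * (e * C) + (v - u) * (A * C)"
proof -
  have "\<bar>integral {0..u} (\<lambda>x. (gc (v - x) - gc (u - x)) * S x)\<bar> \<le> (u - 0) * (e * C)"
  proof (rule abs_integral_le_const)
    show "(\<lambda>x. (gc (v - x) - gc (u - x)) * S x) integrable_on {0..u}"
      using integrable_gc_S[of v 0 u] integrable_gc_S[of u 0 u]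
      by (auto simp: left_diff_distrib intro!: integrable_diff)
    show "\<bar>(gc (v - x) - gc (u - x)) * S x\<bar> \<le> e * C" if "x \<in> {0..u}" for x
      using close[OF that] S_nonneg S_le e by (auto simp: abs_mult intro!: mult_mono)
  qed (use uv in auto)
  moreover have "\<bar>integral {u..v} (\<lambda>x. gc (v - x) * S x)\<bar> \<le> (v - u) * (A * C)"
    using gc_S_nonneg gc_S_le uv by (intro abs_integral_le_const integrable_gc_S) auto
  ultimately show ?thesis unfolding H_increment[OF uv] by (smt (verit) abs_triangle_ineq diff_zero)
qed

lemma continuous_on_H: "continuous_on {0..1} H"
proof (unfold continuous_on_iff, intro ballI allI impI)
  fix y e :: real assume y: "y \<in> {0..1}" and "0 < e"
  define e1 where "e1 = e / (2 * (C + 1))"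
  have e1: "0 < e1" "e1 * C < e / 2"
    using \<open>0 < e\<close> C_nonneg by (simp_all add: e1_def field_simps)
  have "uniformly_continuous_on {-1..1} gc"
    by (rule compact_uniformly_continuous[OF continuous_on_subset[OF gc_continuous] compact_Icc]) auto
  then obtain d1 where "d1 > 0"
    and d1: "\<And>x x'. x \<in> {-1..1} \<Longrightarrow> x' \<in> {-1..1} \<Longrightarrow> dist x' x < d1 \<Longrightarrow> dist (gc x') (gc x) < e1"
    using e1 unfolding uniformly_continuous_on_def by metis
  define d where "d = min d1 (e / (2 * (A * C + 1)))"
  have AC: "0 \<le> A * C" using one_le_A C_nonneg by simp
  have "0 < d" using \<open>d1 > 0\<close> \<open>0 < e\<close> AC by (simp add: d_def)
  have close: "\<bar>H v - H u\<bar> < e" if uv: "0 \<le> u" "u \<le> v" "v \<le> 1" "v - u < d" for u v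
  proof -
    have "\<bar>gc (v - x) - gc (u - x)\<bar> \<le> e1" if "x \<in> {0..u}" for x
      using d1[of "u - x" "v - x"] that uv by (auto simp: d_def dist_real_def)
    then have "\<bar>H v - H u\<bar> \<le> u * (e1 * C) + (v - u) * (A * C)"
      using abs_H_increment_le uv e1 by simp
    moreover have "u * (e1 * C) \<le> e1 * C"
      using uv e1 C_nonneg by (simp add: mult_left_le_one_le)
    moreover have "(v - u) * (A * C) \<le> e / (2 * (A * C + 1)) * (A * C)"
      using uv AC by (intro mult_right_mono) (auto simp: d_def)
    moreover have "e / (2 * (A * C + 1)) * (A * C) < e / 2"
      using \<open>0 < e\<close> AC by (simp add: field_simps)
    ultimately show ?thesis using e1 by linarith
  qed
  show "\<exists>d>0. \<forall>x'\<in>{0..1}. dist x' y < d \<longrightarrow> dist (H x') (H y) < e"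
  proof (intro exI[of _ d] conjI ballI impI \<open>0 < d\<close>)
    fix x' assume "x' \<in> {0..1}" "dist x' y < d"
    with y close[of y x'] close[of x' y] show "dist (H x') (H y) < e"
      by (cases "y \<le> x'") (auto simp: dist_real_def abs_minus_commute)
  qed
qed

definition N :: "real \<Rightarrow> real" where "N t = integral {t..1} (\<lambda>y. fc (y - t) * H y)"

lemma continuous_on_N_integrand: "t \<in> {0..1} \<Longrightarrow> continuous_on {t..1} (\<lambda>y. fc (y - t) * H y)"
  by (intro continuous_intros continuous_on_compose2[OF fc_continuous]
      continuous_on_subset[OF continuous_on_H]) auto

lemma N_nonneg: "t \<in> {0..1} \<Longrightarrow> 0 \<le> N t"
  unfolding N_def using fc_nonneg f_nonneg H_nonneg
  by (intro integral_nonneg integrable_continuous_real continuous_on_N_integrand) auto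

lemma nn_integral_S_tooth_weight:
  assumes t: "t \<in> {0..1}"
  shows "(\<integral>\<^sup>+ a. ennreal (S a * tooth_weight fc gc t a b) \<partial>lborel) = ennreal (fc (b - t) * H b) * indicator {t..1} b"
proof (cases "b \<in> {t..1}")
  case True
  have "(\<integral>\<^sup>+ a. ennreal (S a * tooth_weight fc gc t a b) \<partial>lborel)
      = (\<integral>\<^sup>+ a. ennreal (fc (b - t) * (gc (b - a) * S a)) * indicator {0..b} a \<partial>lborel)"
    using True t by (intro nn_integral_cong) (auto simp: tooth_weight_def indicator_def mult_ac)
  also have "\<dots> = ennreal (fc (b - t) * H b)"
    unfolding H_def
    by (rule nn_integral_has_integral_lebesgue')
       (use fc_nonneg gc_nonneg S_nonneg integrable_gc_S in \<open>auto intro!: has_integral_mult_right integrable_integral\<close>)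
  finally show ?thesis using True by simp
next
  case False
  then show ?thesis using t by (simp add: tooth_weight_def)
qed

text \<open>By Tonelli, integrating out \<open>x\<^sub>2 = a\<close> before \<open>y\<^sub>1 = b\<close> produces \<open>H\<close> and then \<open>N\<close>.\<close>

lemma tooth_marginal_eq_N:
  assumes t: "t \<in> {0..1}"
  shows "tooth_marginal f g S t = ennreal (N t)"
proof -
  have [measurable]: "fc \<in> borel_measurable borel" "gc \<in> borel_measurable borel"
    using clamp01_borel_measurable f_continuous g_continuous by blast+
  have "tooth_marginal f g S t = (\<integral>\<^sup>+ a. (\<integral>\<^sup>+ b. ennreal (S a * tooth_weight fc gc t a b) \<partial>lborel) \<partial>lborel)"
    unfolding tooth_marginal_def tooth_weight_clamp01[of f g]
  proof (intro nn_integral_cong)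
    fix a
    have "(\<lambda>b. tooth_weight fc gc t a b) \<in> borel_measurable borel"
      unfolding tooth_weight_def by measurable
    then show "ennreal (S a) * (\<integral>\<^sup>+ b. ennreal (tooth_weight fc gc t a b) \<partial>lborel)
        = (\<integral>\<^sup>+ b. ennreal (S a * tooth_weight fc gc t a b) \<partial>lborel)"
      using S_nonneg tooth_weight_clamp01_nonneg by (simp add: ennreal_mult nn_integral_cmult)
  qed
  also have "\<dots> = (\<integral>\<^sup>+ b. (\<integral>\<^sup>+ a. ennreal (S a * tooth_weight fc gc t a b) \<partial>lborel) \<partial>lborel)"
    by (rule lborel_pair.Fubini'[symmetric]) (use S_borel in \<open>unfold tooth_weight_def, measurable\<close>)
  also have "\<dots> = (\<integral>\<^sup>+ b. ennreal (fc (b - t) * H b) * indicator {t..1} b \<partial>lborel)"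
    using nn_integral_S_tooth_weight[OF t] by simp
  also have "\<dots> = ennreal (N t)"
    unfolding N_def
    by (rule nn_integral_has_integral_lebesgue')
       (use fc_nonneg f_nonneg H_nonneg t in \<open>auto intro!: integrable_integral integrable_continuous_real continuous_on_N_integrand\<close>)
  finally show ?thesis .
qed

lemma tooth_marginal_eq: "tooth_marginal f g S t = ennreal (N t) * indicator {0..1} t"
  using tooth_marginal_eq_N by (cases "t \<in> {0..1}") (auto simp: tooth_marginal_def tooth_weight_def)

text \<open>To differentiate \<open>N t = \<integral>\<^sub>t\<^sup>1 f(y - t) H(y) dy\<close>, \<open>f\<close> is extended linearly to negative
  arguments, so that the integrand \<open>\<phi> a y\<close> is \<open>C\<^sup>1\<close> in \<open>a\<close> on the whole square and the
  Leibniz rule applies to \<open>Q a b = \<integral>\<^sub>b\<^sup>1 \<phi> a\<close>; then \<open>N t = Q t t\<close>.\<close>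

definition phi :: "real \<Rightarrow> real \<Rightarrow> real" where "phi a y = lin_ext f f' (y - a) * clamp01 H y"

definition Q :: "real \<Rightarrow> real \<Rightarrow> real" where "Q a b = integral {b..1} (phi a)"

lemma continuous_on_phi: "continuous_on ({0..1} \<times> {0..1}) (\<lambda>(a, y). phi a y)"
proof -
  have "continuous_on ({0..1} \<times> {0..1}) (\<lambda>z::real \<times> real. lin_ext f f' (snd z - fst z) * clamp01 H (snd z))"
    by (intro continuous_intros continuous_on_compose2[OF continuous_on_lin_ext[OF has_real_derivative_f]]
        continuous_on_compose2[OF continuous_on_clamp01[OF continuous_on_H]]) auto
  then show ?thesis by (simp add: phi_def case_prod_beta)
qed

lemma continuous_on_phi_right: "a \<in> {0..1} \<Longrightarrow> continuous_on {0..1} (phi a)"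
  by (rule continuous_on_compose2[OF continuous_on_phi, where f="\<lambda>y. (a, y)", simplified])
     (auto intro!: continuous_intros)

lemma has_real_derivative_Q_left:
  assumes t: "t \<in> {0..1}"
  shows "((\<lambda>a. Q a t) has_real_derivative integral {t..1} (\<lambda>y. - lin_ext_deriv f' (y - t) * clamp01 H y))
           (at t within {0..1})"
proof -
  have "((\<lambda>a. integral (cbox t 1) (phi a)) has_field_derivative
        integral (cbox t 1) (\<lambda>y. - lin_ext_deriv f' (y - t) * clamp01 H y)) (at t within {0..1})"
  proof (rule leibniz_rule_field_derivative[where fx="\<lambda>a y. - lin_ext_deriv f' (y - a) * clamp01 H y"])
    fix a y assume a: "a \<in> {0..1::real}" and "y \<in> cbox t (1::real)"
    then have y: "y \<in> {0..1}" using t by auto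
    show "((\<lambda>a. phi a y) has_field_derivative - lin_ext_deriv f' (y - a) * clamp01 H y) (at a within {0..1})"
      unfolding phi_def using DERIV_cmult_right[OF has_real_derivative_lin_ext_diff[OF has_real_derivative_f y a]] .
  next
    fix a assume "a \<in> {0..1::real}"
    then show "phi a integrable_on cbox t 1"
      using integrable_continuous[OF continuous_on_subset[OF continuous_on_phi_right]] t by auto
  next
    have "continuous_on ({0..1} \<times> {t..1}) (\<lambda>z::real \<times> real. - lin_ext_deriv f' (snd z - fst z) * clamp01 H (snd z))"
      by (intro continuous_intros continuous_on_compose2[OF continuous_on_lin_ext_deriv[OF continuous_on_f']]
          continuous_on_compose2[OF continuous_on_clamp01[OF continuous_on_H]]) (use t in auto)
    then show "continuous_on ({0..1} \<times> cbox t 1) (\<lambda>(a, y). - lin_ext_deriv f' (y - a) * clamp01 H y)"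
      by (simp add: case_prod_beta)
  qed (use t in auto)
  then show ?thesis unfolding Q_def by simp
qed

lemma has_real_derivative_Q_diagonal:
  assumes t: "t \<in> {0..1}"
  shows "((\<lambda>s. Q s s) has_real_derivative
     (integral {t..1} (\<lambda>y. - lin_ext_deriv f' (y - t) * clamp01 H y) - phi t t)) (at t within {0..1})"
proof -
  define Dt where "Dt = integral {t..1} (\<lambda>y. - lin_ext_deriv f' (y - t) * clamp01 H y)"
  have dx: "((\<lambda>a. Q a t) has_derivative (*) Dt) (at t within {0..1})"
    using has_real_derivative_Q_left[OF t] by (simp add: Dt_def has_field_derivative_def)
  have dy: "((\<lambda>b. Q a b) has_derivative blinfun_apply (blinfun_mult_right (- phi a b))) (at b within {0..1})"
    if "a \<in> {0..1}" "b \<in> {0..1}" for a b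
    using integral_has_real_derivative'[OF continuous_on_phi_right[OF that(1)] that(2)]
    unfolding Q_def has_field_derivative_eq_has_derivative_blinfun by simp
  have "continuous_on ({0..1} \<times> {0..1}) (\<lambda>z. blinfun_mult_right (- (\<lambda>(a, y). phi a y) z))"
    using continuous_on_phi by (intro continuous_intros)
  then have "continuous_on ({0..1} \<times> {0..1}) (\<lambda>(a, b). blinfun_mult_right (- phi a b))"
    by (simp add: case_prod_beta)
  then have dy_cont: "continuous (at (t, t) within {0..1} \<times> {0..1}) (\<lambda>(a, b). blinfun_mult_right (- phi a b))"
    using t by (simp add: continuous_on_eq_continuous_within)
  have "((\<lambda>(a, b). Q a b) has_derivative (\<lambda>(ha, hb). Dt * ha + blinfun_mult_right (- phi t t) hb))
      (at (t, t) within {0..1} \<times> {0..1})"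
    by (rule has_derivative_partialsI[OF dx dy dy_cont]) (use t in auto)
  then have "((\<lambda>(a, b). Q a b) has_derivative (\<lambda>(ha, hb). Dt * ha + blinfun_mult_right (- phi t t) hb))
      (at (t, t) within (\<lambda>s. (s, s)) ` {0..1})"
    by (rule has_derivative_subset) auto
  moreover have "((\<lambda>s::real. (s, s)) has_derivative (\<lambda>h. (h, h))) (at t within {0..1})"
    by (auto intro!: derivative_eq_intros)
  ultimately have "((\<lambda>s. Q s s) has_derivative (\<lambda>h. Dt * h + blinfun_mult_right (- phi t t) h)) (at t within {0..1})"
    using diff_chain_within by (fastforce simp: o_def)
  moreover have "(\<lambda>h. Dt * h + blinfun_mult_right (- phi t t) h) = (*) (Dt - phi t t)"
    by (auto simp: fun_eq_iff algebra_simps)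
  ultimately show ?thesis by (simp add: has_field_derivative_def Dt_def)
qed

lemma has_real_derivative_N:
  assumes t: "t \<in> {0..1}"
  shows "(N has_real_derivative (- integral {t..1} (\<lambda>y. f' (y - t) * H y) - f 0 * H t)) (at t within {0..1})"
proof -
  have "integral {t..1} (\<lambda>y. - lin_ext_deriv f' (y - t) * clamp01 H y) = - integral {t..1} (\<lambda>y. f' (y - t) * H y)"
    by (subst integral_neg[symmetric], rule integral_cong) (use t in \<open>auto simp: lin_ext_deriv_eq\<close>)
  moreover have "phi t t = f 0 * H t" using t by (simp add: phi_def lin_ext_eq)
  ultimately have Q_diagonal: "((\<lambda>s. Q s s) has_real_derivative (- integral {t..1} (\<lambda>y. f' (y - t) * H y) - f 0 * H t))
      (at t within {0..1})"
    using has_real_derivative_Q_diagonal[OF t] by simp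
  have "Q s s = N s" if "s \<in> {0..1}" for s
    unfolding N_def Q_def phi_def by (rule integral_cong) (use that in \<open>auto simp: lin_ext_eq\<close>)
  then show ?thesis
    by (intro has_field_derivative_transform_within[OF Q_diagonal, where d=1]) (use t in auto)
qed

lemma continuous_on_N: "continuous_on {0..1} N"
  using has_real_derivative_N by (metis DERIV_continuous continuous_on_eq_continuous_within)

lemma f'_shift_has_integral:
  assumes t: "t \<in> {0..1}"
  shows "((\<lambda>y. f' (y - t)) has_integral (f (1 - t) - f 0)) {t..1}"
proof -
  have "((\<lambda>y. f (y - t)) has_vector_derivative f' (y - t)) (at y within {t..1})" if y: "y \<in> {t..1}" for y
  proof -
    have inner: "((\<lambda>y. y - t) has_real_derivative 1) (at y within {t..1})"
      by (auto intro!: derivative_eq_intros)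
    have "(f has_real_derivative f' (y - t)) (at (y - t) within {0..1})"
      using has_real_derivative_f y t by auto
    then have "(f has_real_derivative f' (y - t)) (at (y - t) within (\<lambda>y. y - t) ` {t..1})"
      by (rule DERIV_subset) (use t in auto)
    from DERIV_image_chain[OF this inner] show ?thesis
      by (simp add: o_def has_real_derivative_iff_has_vector_derivative)
  qed
  from fundamental_theorem_of_calculus[OF _ this] t show ?thesis by auto
qed

text \<open>Both terms of \<open>N'\<close> are nonnegative: \<open>f' \<ge> 0\<close> integrates to at most \<open>A\<close>, and \<open>H \<le> A m\<close>.\<close>

lemma abs_N_derivative_le:
  assumes t: "t \<in> {0..1}"
  shows "\<bar>- integral {t..1} (\<lambda>y. f' (y - t) * H y) - f 0 * H t\<bar> \<le> 2 * A^2 * m"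
proof -
  let ?I = "integral {t..1} (\<lambda>y. f' (y - t) * H y)"
  have int: "(\<lambda>y. f' (y - t) * H y) integrable_on {t..1}"
    using t by (intro integrable_continuous_real continuous_intros
        continuous_on_compose2[OF continuous_on_f'] continuous_on_subset[OF continuous_on_H]) auto
  have "0 \<le> ?I" using t f'_nonneg H_nonneg by (intro integral_nonneg int) auto
  have "?I \<le> integral {t..1} (\<lambda>y. f' (y - t) * (A * m))"
    using f'_shift_has_integral[OF t] t f'_nonneg H_le_A_m
    by (intro integral_le int integrable_on_mult_left mult_left_mono) auto
  also have "\<dots> = (f (1 - t) - f 0) * (A * m)"
    using f'_shift_has_integral[OF t] by (simp add: integral_unique has_integral_mult_left)
  also have "\<dots> \<le> A * (A * m)"
  proof (rule mult_right_mono)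
    have "\<bar>f (1 - t)\<bar> \<le> A" "0 \<le> f 0" using f_bound f_nonneg t by auto
    then show "f (1 - t) - f 0 \<le> A" by linarith
  qed (use one_le_A m_nonneg in simp)
  finally have "?I \<le> A^2 * m" by (simp add: power2_eq_square)
  moreover have "0 \<le> f 0 * H t" using f_nonneg H_nonneg by simp
  moreover have "f 0 * H t \<le> A * (A * m)"
    using f_bound f_nonneg H_le_A_m[OF t] H_nonneg one_le_A by (intro mult_mono) (auto simp: abs_le_iff)
  then have "f 0 * H t \<le> A^2 * m" by (simp add: power2_eq_square)
  ultimately show ?thesis using \<open>0 \<le> ?I\<close> by linarith
qed

lemma integral_S_initial_ge: "\<delta> * m \<le> integral {0..\<delta>} S"
proof -
  define I0 where "I0 = integral {0..\<delta>} S"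
  define I1 where "I1 = integral {\<delta>..1} S"
  have split: "m = I0 + I1"
    unfolding m_def I0_def I1_def
    using Henstock_Kurzweil_Integration.integral_combine[OF _ _ integrable_S, of 0 \<delta> 1] delta_bounds by auto
  have "integral {0..\<delta>} (\<lambda>_::real. S \<delta>) \<le> I0"
    unfolding I0_def by (rule integral_le) (use integrable_S S_antitone in auto)
  then have lower: "\<delta> * S \<delta> \<le> I0" using delta_bounds by simp
  have "I1 \<le> integral {\<delta>..1} (\<lambda>_::real. S \<delta>)"
    unfolding I1_def by (rule integral_le) (use integrable_S S_antitone in auto)
  then have upper: "I1 \<le> (1 - \<delta>) * S \<delta>" using delta_bounds by simp
  have "\<delta> * m = \<delta> * I0 + \<delta> * I1" by (simp add: split algebra_simps)
  also have "\<dots> \<le> \<delta> * I0 + \<delta> * ((1 - \<delta>) * S \<delta>)"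
    using upper delta_bounds by (intro add_left_mono mult_left_mono) auto
  also have "\<dots> = \<delta> * I0 + (1 - \<delta>) * (\<delta> * S \<delta>)" by (simp add: algebra_simps)
  also have "\<dots> \<le> \<delta> * I0 + (1 - \<delta>) * I0"
    using lower delta_bounds by (intro add_left_mono mult_left_mono) auto
  finally show ?thesis unfolding I0_def by (simp add: algebra_simps)
qed

lemma H_ge: assumes y: "y \<in> {1 - \<delta>..1}" shows "\<delta> * m / 2 \<le> H y"
proof -
  have "integral {0..\<delta>} (\<lambda>x. 1/2 * S x) \<le> integral {0..\<delta>} (\<lambda>x. gc (y - x) * S x)"
  proof (rule integral_le)
    fix x assume x: "x \<in> {0..\<delta>}"
    have "1/2 \<le> gc (1 - 2 * \<delta>)" using g_ge_half delta_bounds by simp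
    also have "\<dots> \<le> gc (y - x)" using x y by (intro gc_mono) auto
    finally show "1/2 * S x \<le> gc (y - x) * S x" using S_nonneg by (intro mult_right_mono) auto
  qed (use integrable_S integrable_gc_S in auto)
  also have "\<dots> \<le> H y" unfolding H_def
    by (rule integral_subset_le) (use delta_bounds y integrable_gc_S gc_S_nonneg g_nonneg S_nonneg in auto)
  finally show ?thesis using integral_S_initial_ge by simp
qed

lemma N_ge: assumes t: "t \<in> {0..\<delta>}" shows "\<delta> * (\<delta> * m / 4) \<le> N t"
proof -
  have t01: "t \<in> {0..1}" using t delta_bounds by auto
  have int: "(\<lambda>y. fc (y - t) * H y) integrable_on {t..1}"
    by (rule integrable_continuous_real[OF continuous_on_N_integrand[OF t01]])
  have int': "(\<lambda>y. fc (y - t) * H y) integrable_on {1 - \<delta>..1}"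
    by (rule integrable_subinterval_real[OF int]) (use t delta_bounds in auto)
  have "integral {1 - \<delta>..1} (\<lambda>_::real. 1/2 * (\<delta> * m / 2)) \<le> integral {1 - \<delta>..1} (\<lambda>y. fc (y - t) * H y)"
  proof (rule integral_le)
    fix y assume y: "y \<in> {1 - \<delta>..1}"
    have "1/2 \<le> fc (1 - 2 * \<delta>)" using f_ge_half delta_bounds by simp
    also have "\<dots> \<le> fc (y - t)" using t y by (intro fc_mono) auto
    finally show "1/2 * (\<delta> * m / 2) \<le> fc (y - t) * H y"
      using H_ge[OF y] delta_bounds m_nonneg by (intro mult_mono) auto
  qed (use int' in auto)
  also have "\<dots> \<le> N t" unfolding N_def
    by (rule integral_subset_le) (use delta_bounds t int int' fc_nonneg f_nonneg H_nonneg in auto)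
  finally show ?thesis using delta_bounds by (simp add: algebra_simps)
qed

lemma integral_N_ge: "m / (256 * A^3) \<le> integral {0..1} N"
proof -
  have int: "N integrable_on {0..1}" by (rule integrable_continuous_real[OF continuous_on_N])
  have "integral {0..\<delta>} (\<lambda>_::real. \<delta> * (\<delta> * m / 4)) \<le> integral {0..\<delta>} N"
    by (rule integral_le) (use N_ge integrable_subinterval_real[OF int, of 0 \<delta>] delta_bounds in auto)
  also have "\<dots> \<le> integral {0..1} N"
    by (rule integral_subset_le) (use delta_bounds int integrable_subinterval_real[OF int, of 0 \<delta>] N_nonneg in auto)
  finally have "\<delta> * (\<delta> * (\<delta> * m / 4)) \<le> integral {0..1} N" using delta_bounds by simp
  moreover have "\<delta> * (\<delta> * (\<delta> * m / 4)) = m / (256 * A^3)"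
    using one_le_A by (simp add: \<delta>_def field_simps power3_eq_cube)
  ultimately show ?thesis by simp
qed

lemma nn_integral_tooth_marginal: "(\<integral>\<^sup>+ t. tooth_marginal f g S t \<partial>lborel) = ennreal (integral {0..1} N)"
  unfolding tooth_marginal_eq
  by (rule nn_integral_has_integral_lebesgue')
     (use N_nonneg integrable_continuous_real[OF continuous_on_N] in auto)

text \<open>A zero denominator makes the density the constant \<open>0\<close> (division by zero is zero in HOL).\<close>

theorem tooth_marginal_density_derivative_bound:
  assumes t: "t \<in> {0..1}"
  shows "\<exists>D. ((\<lambda>t. enn2real (tooth_marginal f g S t) / enn2real (\<integral>\<^sup>+ t. tooth_marginal f g S t \<partial>lborel))
             has_real_derivative D) (at t within {0..1}) \<and> \<bar>D\<bar> \<le> 512 * A^5"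
proof -
  define Z where "Z = integral {0..1} N"
  have "0 \<le> Z"
    unfolding Z_def using N_nonneg by (intro integral_nonneg integrable_continuous_real[OF continuous_on_N]) auto
  have density_eq: "enn2real (tooth_marginal f g S s) / enn2real (\<integral>\<^sup>+ t. tooth_marginal f g S t \<partial>lborel) = N s / Z"
    if "s \<in> {0..1}" for s
    using that N_nonneg[OF that] \<open>0 \<le> Z\<close> unfolding nn_integral_tooth_marginal
    by (simp add: tooth_marginal_eq Z_def)
  show ?thesis
  proof (cases "Z = 0")
    case True
    have "((\<lambda>s. 0::real) has_real_derivative 0) (at t within {0..1})" by simp
    then have "((\<lambda>t. enn2real (tooth_marginal f g S t) / enn2real (\<integral>\<^sup>+ t. tooth_marginal f g S t \<partial>lborel))
             has_real_derivative 0) (at t within {0..1})"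
      by (rule has_field_derivative_transform_within[where d=1]) (use t True density_eq in auto)
    then show ?thesis using one_le_A by (intro exI[of _ 0]) auto
  next
    case False
    then have "0 < Z" using \<open>0 \<le> Z\<close> by simp
    define N' where "N' = - integral {t..1} (\<lambda>y. f' (y - t) * H y) - f 0 * H t"
    have "((\<lambda>s. N s / Z) has_real_derivative N' / Z) (at t within {0..1})"
      unfolding N'_def by (rule DERIV_cdivide[OF has_real_derivative_N[OF t]])
    then have deriv: "((\<lambda>t. enn2real (tooth_marginal f g S t) / enn2real (\<integral>\<^sup>+ t. tooth_marginal f g S t \<partial>lborel))
             has_real_derivative N' / Z) (at t within {0..1})"
      by (rule has_field_derivative_transform_within[where d=1]) (use t density_eq in auto)
    have "m \<le> 256 * A^3 * Z"
      using integral_N_ge one_le_A by (simp add: Z_def divide_le_eq mult_ac)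
    then have "2 * A^2 * m \<le> 2 * A^2 * (256 * A^3 * Z)" by (rule mult_left_mono) simp
    then have "\<bar>N'\<bar> \<le> 2 * A^2 * (256 * A^3 * Z)"
      using abs_N_derivative_le[OF t] unfolding N'_def by linarith
    also have "\<dots> = 512 * A^5 * Z" by (simp add: power_add[symmetric] mult_ac numeral_eq_Suc)
    finally have "\<bar>N' / Z\<bar> \<le> 512 * A^5" using \<open>0 < Z\<close> by (simp add: divide_le_eq)
    with deriv show ?thesis by blast
  qed
qed

end

section \<open>Factorisation of the Sawtooth weight\<close>

definition tooth_factor ::
  "(nat \<Rightarrow> real \<Rightarrow> real) \<Rightarrow> (nat \<Rightarrow> real \<Rightarrow> real) \<Rightarrow> (nat \<Rightarrow> real) \<Rightarrow> (nat \<Rightarrow> real) \<Rightarrow> nat \<Rightarrow> real" where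
  "tooth_factor f g x y i = indicator {0..1} (y i) * (if x i \<le> y i then 1 else 0)
     * (if x (Suc i) \<le> y i then 1 else 0) * f i (y i - x i) * g i (y i - x (Suc i))"

text \<open>The weight with the first tooth and the box constraints on \<open>x\<^sub>1, x\<^sub>2\<close> removed; it involves
  \<open>x\<^sub>2\<close> only through the second tooth and does not involve \<open>x\<^sub>1, y\<^sub>1\<close> at all.\<close>

definition tail_weight ::
  "nat \<Rightarrow> (nat \<Rightarrow> real \<Rightarrow> real) \<Rightarrow> (nat \<Rightarrow> real \<Rightarrow> real) \<Rightarrow> (nat \<Rightarrow> real) \<Rightarrow> (nat \<Rightarrow> real) \<Rightarrow> real" where
  "tail_weight n f g x y = (\<Prod>i\<in>{3..n+1}. indicator {0..1} (x i)) * (\<Prod>i\<in>{2..n}. tooth_factor f g x y i)"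

lemma saw_weight_tooth_factors:
  "saw_weight n f g x y = (\<Prod>i\<in>{1..n+1}. indicator {0..1} (x i)) * (\<Prod>i\<in>{1..n}. tooth_factor f g x y i)"
  unfolding saw_weight_def tooth_factor_def by simp

lemma saw_weight_clamp01:
  "saw_weight n f g x y = saw_weight n (\<lambda>i. clamp01 (f i)) (\<lambda>i. clamp01 (g i)) x y"
proof (cases "\<forall>j\<in>{1..n+1}. x j \<in> {0..1}")
  case True
  have "tooth_factor f g x y i = tooth_factor (\<lambda>i. clamp01 (f i)) (\<lambda>i. clamp01 (g i)) x y i"
    if "i \<in> {1..n}" for i
  proof -
    have "x i \<in> {0..1}" "x (Suc i) \<in> {0..1}" using True that by auto
    then show ?thesis by (auto simp: tooth_factor_def indicator_def)
  qed
  then show ?thesis unfolding saw_weight_tooth_factors by simp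
next
  case False
  then obtain j where j: "j \<in> {1..n+1}" "x j \<notin> {0..1}" by blast
  then have "indicator {0..1} (x j) = (0::real)" by simp
  then have "(\<Prod>i\<in>{1..n+1}. indicator {0..1} (x i) :: real) = 0"
    using j(1) by (intro prod_zero) auto
  then show ?thesis unfolding saw_weight_tooth_factors by simp
qed

lemma saw_weight_first_tooth:
  assumes "1 \<le> n"
  shows "saw_weight n f g (x(1 := t)) y = tooth_weight (f 1) (g 1) t (x 2) (y 1) * tail_weight n f g x y"
proof -
  have "{1..n+1} = insert 1 (insert 2 {3..n+1})" "{1..n} = insert 1 {2..n}" using assms by auto
  moreover have "(\<Prod>i\<in>{2..n}. tooth_factor f g (x(1 := t)) y i) = (\<Prod>i\<in>{2..n}. tooth_factor f g x y i)"
    by (rule prod.cong) (auto simp: tooth_factor_def)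
  moreover have "tooth_factor f g (x(1 := t)) y 1 = indicator {0..1} (y 1) * (if t \<le> y 1 then 1 else 0)
      * (if x 2 \<le> y 1 then 1 else 0) * f 1 (y 1 - t) * g 1 (y 1 - x 2)"
    by (simp add: tooth_factor_def numeral_2_eq_2)
  ultimately show ?thesis
    unfolding saw_weight_tooth_factors tail_weight_def tooth_weight_def by (simp add: mult_ac)
qed

lemma tail_weight_fun_upd_1: "tail_weight n f g x (y(1 := v)) = tail_weight n f g x y"
  unfolding tail_weight_def by (intro arg_cong2[where f="(*)"] refl prod.cong) (auto simp: tooth_factor_def)

lemma indicator_unit_interval_measurable:
  fixes X :: "'a \<Rightarrow> nat \<Rightarrow> real"
  assumes "(\<lambda>w. X w i) \<in> borel_measurable M"
  shows "(\<lambda>w. indicator {0..1} (X w i) :: real) \<in> borel_measurable M"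
  by (rule measurable_compose[OF assms borel_measurable_indicator[OF atLeastAtMost_borel]])

lemma tooth_factor_measurable:
  assumes [measurable]: "f i \<in> borel_measurable borel" "g i \<in> borel_measurable borel"
    "(\<lambda>w. X w i) \<in> borel_measurable M" "(\<lambda>w. X w (Suc i)) \<in> borel_measurable M"
    "(\<lambda>w. Y w i) \<in> borel_measurable M"
  shows "(\<lambda>w. tooth_factor f g (X w) (Y w) i) \<in> borel_measurable M"
  unfolding tooth_factor_def by measurable

lemma saw_weight_measurable:
  assumes "\<And>i. i \<in> {1..n} \<Longrightarrow> f i \<in> borel_measurable borel" "\<And>i. i \<in> {1..n} \<Longrightarrow> g i \<in> borel_measurable borel"
    and "\<And>i. i \<in> {1..n+1} \<Longrightarrow> (\<lambda>w. X w i) \<in> borel_measurable M"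
    and "\<And>i. i \<in> {1..n} \<Longrightarrow> (\<lambda>w. Y w i) \<in> borel_measurable M"
  shows "(\<lambda>w. saw_weight n f g (X w) (Y w)) \<in> borel_measurable M"
  unfolding saw_weight_tooth_factors using assms
  by (intro borel_measurable_times borel_measurable_prod tooth_factor_measurable
      indicator_unit_interval_measurable) auto

lemma tail_weight_measurable:
  assumes "\<And>i. i \<in> {2..n} \<Longrightarrow> f i \<in> borel_measurable borel" "\<And>i. i \<in> {2..n} \<Longrightarrow> g i \<in> borel_measurable borel"
    and "\<And>i. i \<in> {2..n+1} \<Longrightarrow> (\<lambda>w. X w i) \<in> borel_measurable M"
    and "\<And>i. i \<in> {2..n} \<Longrightarrow> (\<lambda>w. Y w i) \<in> borel_measurable M"
  shows "(\<lambda>w. tail_weight n f g (X w) (Y w)) \<in> borel_measurable M"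
  unfolding tail_weight_def using assms
  by (intro borel_measurable_times borel_measurable_prod tooth_factor_measurable
      indicator_unit_interval_measurable) auto

lemma saw_weight_nonneg:
  assumes "\<And>i u. i \<in> {1..n} \<Longrightarrow> 0 \<le> f i u" "\<And>i u. i \<in> {1..n} \<Longrightarrow> 0 \<le> g i u"
  shows "0 \<le> saw_weight n f g x y"
  unfolding saw_weight_tooth_factors using assms
  by (intro mult_nonneg_nonneg prod_nonneg) (auto simp: tooth_factor_def indicator_def)

lemma tail_weight_nonneg:
  assumes "\<And>i u. i \<in> {2..n} \<Longrightarrow> 0 \<le> f i u" "\<And>i u. i \<in> {2..n} \<Longrightarrow> 0 \<le> g i u"
  shows "0 \<le> tail_weight n f g x y"
  unfolding tail_weight_def using assms
  by (intro mult_nonneg_nonneg prod_nonneg) (auto simp: tooth_factor_def indicator_def)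

lemma tail_weight_le:
  assumes f: "\<And>i u. i \<in> {2..n} \<Longrightarrow> 0 \<le> f i u \<and> f i u \<le> bf i"
    and g: "\<And>i u. i \<in> {2..n} \<Longrightarrow> 0 \<le> g i u \<and> g i u \<le> bg i"
  shows "tail_weight n f g x y \<le> (\<Prod>i\<in>{2..n}. bf i * bg i)
            * ((\<Prod>i\<in>{3..n+1}. indicator {0..1} (x i)) * (\<Prod>i\<in>{2..n}. indicator {0..1} (y i)))"
proof -
  have "tooth_factor f g x y i \<le> bf i * bg i * indicator {0..1} (y i)" if i: "i \<in> {2..n}" for i
  proof -
    have "0 \<le> bf i" "0 \<le> bg i" using f[OF i, of 0] g[OF i, of 0] by auto
    moreover have "f i (y i - x i) * g i (y i - x (Suc i)) \<le> bf i * bg i"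
      using f[OF i] g[OF i] by (intro mult_mono) (auto intro: order.trans)
    ultimately show ?thesis using f[OF i] g[OF i] by (auto simp: tooth_factor_def indicator_def)
  qed
  moreover have "0 \<le> tooth_factor f g x y i" if "i \<in> {2..n}" for i
    using f[OF that] g[OF that] by (auto simp: tooth_factor_def indicator_def)
  ultimately have "(\<Prod>i\<in>{2..n}. tooth_factor f g x y i) \<le> (\<Prod>i\<in>{2..n}. bf i * bg i * indicator {0..1} (y i))"
    by (intro prod_mono) auto
  then have "(\<Prod>i\<in>{2..n}. tooth_factor f g x y i) \<le> (\<Prod>i\<in>{2..n}. bf i * bg i) * (\<Prod>i\<in>{2..n}. indicator {0..1} (y i))"
    by (simp add: prod.distrib)
  moreover have "0 \<le> (\<Prod>i\<in>{3..n+1}. indicator {0..1} (x i) :: real)" by (intro prod_nonneg) auto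
  ultimately show ?thesis unfolding tail_weight_def
    by (metis (no_types, lifting) mult.left_commute mult_left_mono)
qed

lemma tail_weight_antitone:
  assumes "2 \<le> n" and f2_mono: "\<And>u v. u \<le> v \<Longrightarrow> f 2 u \<le> f 2 v"
    and f: "\<And>i u. i \<in> {2..n} \<Longrightarrow> 0 \<le> f i u" and g: "\<And>i u. i \<in> {2..n} \<Longrightarrow> 0 \<le> g i u"
    and "a \<le> b"
  shows "tail_weight n f g (x(2 := b)) y \<le> tail_weight n f g (x(2 := a)) y"
proof -
  have "(\<Prod>i\<in>{3..n+1}. indicator {0..1} ((x(2 := c)) i)) = (\<Prod>i\<in>{3..n+1}. indicator {0..1} (x i) :: real)"
    "(\<Prod>i\<in>{3..n}. tooth_factor f g (x(2 := c)) y i) = (\<Prod>i\<in>{3..n}. tooth_factor f g x y i)" for c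
    by (auto intro!: prod.cong simp: tooth_factor_def)
  moreover have "{2..n} = insert 2 {3..n}" using \<open>2 \<le> n\<close> by auto
  ultimately have split: "tail_weight n f g (x(2 := c)) y = (\<Prod>i\<in>{3..n+1}. indicator {0..1} (x i))
      * (tooth_factor f g (x(2 := c)) y 2 * (\<Prod>i\<in>{3..n}. tooth_factor f g x y i))" for c
    unfolding tail_weight_def by simp
  have nonneg2: "0 \<le> f 2 u" "0 \<le> g 2 u" for u using f g \<open>2 \<le> n\<close> by auto
  have factor: "tooth_factor f g (x(2 := c)) y 2 = indicator {0..1} (y 2) * (if c \<le> y 2 then 1 else 0)
      * (if x 3 \<le> y 2 then 1 else 0) * f 2 (y 2 - c) * g 2 (y 2 - x 3)" for c
    by (simp add: tooth_factor_def eval_nat_numeral)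
  have "tooth_factor f g (x(2 := b)) y 2 \<le> tooth_factor f g (x(2 := a)) y 2"
    unfolding factor using \<open>a \<le> b\<close> nonneg2 f2_mono[of "y 2 - b" "y 2 - a"]
    by (auto simp: indicator_def intro!: mult_right_mono)
  moreover have "0 \<le> (\<Prod>i\<in>{3..n}. tooth_factor f g x y i)"
    using f g by (intro prod_nonneg) (auto simp: tooth_factor_def indicator_def)
  moreover have "0 \<le> (\<Prod>i\<in>{3..n+1}. indicator {0..1} (x i) :: real)" by (intro prod_nonneg) auto
  ultimately show ?thesis unfolding split by (intro mult_left_mono mult_right_mono)
qed

section \<open>Integrating out the other particles\<close>

interpretation lborel_product: product_sigma_finite "\<lambda>_::nat. (lborel :: real measure)"
  by (simp add: product_sigma_finite_def lborel.sigma_finite_measure_axioms)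

abbreviation PM :: "nat set \<Rightarrow> (nat \<Rightarrow> real) measure" where
  "PM I \<equiv> PiM I (\<lambda>_. lborel)"

lemma measurable_fun_upd_snd_component:
  "i \<in> K \<or> i = j \<Longrightarrow> (\<lambda>w. ((snd w)(j := s)) i) \<in> borel_measurable (PM I \<Otimes>\<^sub>M PM K)"
  by (cases "i = j") auto

lemma nn_integral_PiM_pair:
  assumes "finite J" "G \<in> borel_measurable (PM I \<Otimes>\<^sub>M PM J)"
  shows "(\<integral>\<^sup>+ z. G z \<partial>(PM I \<Otimes>\<^sub>M PM J)) = (\<integral>\<^sup>+ x. \<integral>\<^sup>+ y. G (x, y) \<partial>PM J \<partial>PM I)"
  using sigma_finite_measure.nn_integral_fst[OF lborel_product.sigma_finite[OF assms(1)] assms(2)] by simp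

lemma nn_integral_unit_cube:
  assumes "finite I"
  shows "(\<integral>\<^sup>+ x. ennreal (\<Prod>i\<in>I. indicator {0..1} (x i)) \<partial>PM I) = 1"
proof -
  have "(\<integral>\<^sup>+ x. ennreal (\<Prod>i\<in>I. indicator {0..1} (x i)) \<partial>PM I)
      = (\<integral>\<^sup>+ x. (\<Prod>i\<in>I. ennreal (indicator {0..1} (x i))) \<partial>PM I)"
    by (rule nn_integral_cong) (simp add: prod_ennreal)
  also have "\<dots> = (\<Prod>i\<in>I. \<integral>\<^sup>+ u. ennreal (indicator {0..1::real} u) \<partial>lborel)"
    by (subst lborel_product.product_nn_integral_prod) (use assms in auto)
  finally show ?thesis by (simp add: ennreal_indicator)
qed

lemma unit_cube_indicator_measurable:
  "J \<subseteq> I \<Longrightarrow> (\<lambda>y. \<Prod>i\<in>J. indicator {0..1} (y i) :: real) \<in> borel_measurable (PM I)"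
  by (intro borel_measurable_prod indicator_unit_interval_measurable) auto

lemma nn_integral_PiM_pair_insert:
  assumes "finite I" "i \<notin> I" "finite J" and G: "G \<in> borel_measurable (PM (insert i I) \<Otimes>\<^sub>M PM J)"
  shows "(\<integral>\<^sup>+ z. G z \<partial>(PM (insert i I) \<Otimes>\<^sub>M PM J))
       = (\<integral>\<^sup>+ t. (\<integral>\<^sup>+ z. G ((fst z)(i := t), snd z) \<partial>(PM I \<Otimes>\<^sub>M PM J)) \<partial>lborel)"
proof -
  have "(\<lambda>x. \<integral>\<^sup>+ y. G (x, y) \<partial>PM J) \<in> borel_measurable (PM (insert i I))"
    using sigma_finite_measure.borel_measurable_nn_integral[OF lborel_product.sigma_finite[OF \<open>finite J\<close>], of "curry G"] G
    by simp
  then have "(\<integral>\<^sup>+ z. G z \<partial>(PM (insert i I) \<Otimes>\<^sub>M PM J))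
      = (\<integral>\<^sup>+ t. (\<integral>\<^sup>+ x. \<integral>\<^sup>+ y. G (x(i := t), y) \<partial>PM J \<partial>PM I) \<partial>lborel)"
    unfolding nn_integral_PiM_pair[OF \<open>finite J\<close> G]
    by (rule lborel_product.product_nn_integral_insert_rev[OF assms(1,2)])
  also have "\<dots> = (\<integral>\<^sup>+ t. (\<integral>\<^sup>+ z. G ((fst z)(i := t), snd z) \<partial>(PM I \<Otimes>\<^sub>M PM J)) \<partial>lborel)"
  proof (rule nn_integral_cong)
    fix t :: real
    have "(\<lambda>z. ((fst z)(i := t), snd z)) \<in> measurable (PM I \<Otimes>\<^sub>M PM J) (PM (insert i I) \<Otimes>\<^sub>M PM J)"
      by (intro measurable_Pair measurable_fun_upd[where J=I]) auto
    from measurable_comp[OF this G] nn_integral_PiM_pair[OF \<open>finite J\<close>]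
    show "(\<integral>\<^sup>+ x. \<integral>\<^sup>+ y. G (x(i := t), y) \<partial>PM J \<partial>PM I) = (\<integral>\<^sup>+ z. G ((fst z)(i := t), snd z) \<partial>(PM I \<Otimes>\<^sub>M PM J))"
      by (simp add: o_def)
  qed
  finally show ?thesis .
qed

lemma measurable_pair_PiM_fun_upd_invariant:
  assumes U: "U \<in> borel_measurable (PM I \<Otimes>\<^sub>M PM (insert j J))" and "\<And>x y v. U (x, y(j := v)) = U (x, y)"
  shows "U \<in> borel_measurable (PM I \<Otimes>\<^sub>M PM J)"
proof -
  have "(\<lambda>z. (fst z, (snd z)(j := 0))) \<in> measurable (PM I \<Otimes>\<^sub>M PM J) (PM I \<Otimes>\<^sub>M PM (insert j J))"
    by (intro measurable_Pair measurable_fun_upd[where J=J]) auto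
  from measurable_comp[OF this U] show ?thesis by (simp add: o_def assms(2))
qed

lemma nn_integral_PiM_insert_factor:
  assumes "finite J" "j \<notin> J" and k: "k \<in> borel_measurable borel" "\<And>b. 0 \<le> k b"
    and V: "V \<in> borel_measurable (PM J)" "\<And>y. 0 \<le> V y" "\<And>y v. V (y(j := v)) = V y"
    and kV: "(\<lambda>y. ennreal (k (y j) * V y)) \<in> borel_measurable (PM (insert j J))"
  shows "(\<integral>\<^sup>+ y. ennreal (k (y j) * V y) \<partial>PM (insert j J))
       = (\<integral>\<^sup>+ y. ennreal (V y) \<partial>PM J) * (\<integral>\<^sup>+ b. ennreal (k b) \<partial>lborel)"
proof -
  have "(\<integral>\<^sup>+ y. ennreal (k (y j) * V y) \<partial>PM (insert j J))
      = (\<integral>\<^sup>+ y. \<integral>\<^sup>+ b. ennreal (k b * V y) \<partial>lborel \<partial>PM J)"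
    using lborel_product.product_nn_integral_insert[OF assms(1,2) kV] by (simp add: V(3))
  also have "\<dots> = (\<integral>\<^sup>+ y. ennreal (V y) * (\<integral>\<^sup>+ b. ennreal (k b) \<partial>lborel) \<partial>PM J)"
    using k V(2) by (simp add: ennreal_mult mult.commute nn_integral_cmult)
  also have "\<dots> = (\<integral>\<^sup>+ y. ennreal (V y) \<partial>PM J) * (\<integral>\<^sup>+ b. ennreal (k b) \<partial>lborel)"
    using V(1) by (intro nn_integral_multc) simp
  finally show ?thesis .
qed

lemma nn_integral_PiM_insert_coordinate:
  assumes "finite I" "i \<notin> I" and \<phi>: "\<phi> \<in> borel_measurable (PM (insert i I))"
    and \<kappa>: "\<kappa> \<in> borel_measurable borel"
  shows "(\<integral>\<^sup>+ x. \<phi> x * \<kappa> (x i) \<partial>PM (insert i I)) = (\<integral>\<^sup>+ a. (\<integral>\<^sup>+ x. \<phi> (x(i := a)) \<partial>PM I) * \<kappa> a \<partial>lborel)"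
proof -
  have "(\<lambda>x. \<phi> x * \<kappa> (x i)) \<in> borel_measurable (PM (insert i I))"
    using \<phi> \<kappa> by measurable
  then have "(\<integral>\<^sup>+ x. \<phi> x * \<kappa> (x i) \<partial>PM (insert i I)) = (\<integral>\<^sup>+ a. (\<integral>\<^sup>+ x. \<phi> (x(i := a)) * \<kappa> a \<partial>PM I) \<partial>lborel)"
    by (subst lborel_product.product_nn_integral_insert_rev[OF assms(1,2)]) simp_all
  also have "\<dots> = (\<integral>\<^sup>+ a. (\<integral>\<^sup>+ x. \<phi> (x(i := a)) \<partial>PM I) * \<kappa> a \<partial>lborel)"
  proof (rule nn_integral_cong)
    fix a :: real
    have "(\<lambda>x. x(i := a)) \<in> measurable (PM I) (PM (insert i I))"
      by (rule measurable_fun_upd[where J=I]) auto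
    from measurable_comp[OF this \<phi>]
    show "(\<integral>\<^sup>+ x. \<phi> (x(i := a)) * \<kappa> a \<partial>PM I) = (\<integral>\<^sup>+ x. \<phi> (x(i := a)) \<partial>PM I) * \<kappa> a"
      by (intro nn_integral_multc) (simp add: o_def)
  qed
  finally show ?thesis .
qed

definition tail_marginal ::
  "nat set \<Rightarrow> nat set \<Rightarrow> ((nat \<Rightarrow> real) \<times> (nat \<Rightarrow> real) \<Rightarrow> real) \<Rightarrow> real \<Rightarrow> ennreal" where
  "tail_marginal I J U a = (\<integral>\<^sup>+ x. \<integral>\<^sup>+ y. ennreal (U (x(2 := a), y)) \<partial>PM J \<partial>PM I)"

lemma nn_integral_first_tooth:
  assumes I: "finite I" "1 \<notin> I" "2 \<notin> I" and J: "finite J" "1 \<notin> J"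
    and U: "U \<in> borel_measurable (PM (insert 2 I) \<Otimes>\<^sub>M PM (insert 1 J))"
      "U \<in> borel_measurable (PM (insert 2 I) \<Otimes>\<^sub>M PM J)"
      "\<And>x y v. U (x, y(1 := v)) = U (x, y)" "\<And>z. 0 \<le> U z"
    and K: "(\<lambda>(a, b). K a b) \<in> borel_measurable (lborel \<Otimes>\<^sub>M lborel)" "\<And>a b. 0 \<le> K a b"
  shows "(\<integral>\<^sup>+ z. ennreal (K (fst z 2) (snd z 1) * U z) \<partial>(PM (insert 2 I) \<Otimes>\<^sub>M PM (insert 1 J)))
       = (\<integral>\<^sup>+ a. tail_marginal I J U a * (\<integral>\<^sup>+ b. ennreal (K a b) \<partial>lborel) \<partial>lborel)"
proof -
  have [measurable]: "(\<lambda>(a, b). K a b) \<in> borel_measurable (borel \<Otimes>\<^sub>M borel)" using K(1) by simp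
  have U_J: "(\<lambda>x. \<integral>\<^sup>+ y. ennreal (U (x, y)) \<partial>PM J) \<in> borel_measurable (PM (insert 2 I))"
    using sigma_finite_measure.borel_measurable_nn_integral[OF lborel_product.sigma_finite[OF J(1)],
        of "\<lambda>x y. ennreal (U (x, y))"] U(2) by simp
  have KU: "(\<lambda>z. ennreal (K (fst z 2) (snd z 1) * U z)) \<in> borel_measurable (PM (insert 2 I) \<Otimes>\<^sub>M PM (insert 1 J))"
    using U(1) by measurable
  then have "(\<integral>\<^sup>+ z. ennreal (K (fst z 2) (snd z 1) * U z) \<partial>(PM (insert 2 I) \<Otimes>\<^sub>M PM (insert 1 J)))
      = (\<integral>\<^sup>+ x. \<integral>\<^sup>+ y. ennreal (K (x 2) (y 1) * U (x, y)) \<partial>PM (insert 1 J) \<partial>PM (insert 2 I))"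
    using nn_integral_PiM_pair J(1) by simp
  also have "\<dots> = (\<integral>\<^sup>+ x. (\<integral>\<^sup>+ y. ennreal (U (x, y)) \<partial>PM J) * (\<integral>\<^sup>+ b. ennreal (K (x 2) b) \<partial>lborel) \<partial>PM (insert 2 I))"
  proof (rule nn_integral_cong)
    fix x assume x: "x \<in> space (PM (insert 2 I))"
    show "(\<integral>\<^sup>+ y. ennreal (K (x 2) (y 1) * U (x, y)) \<partial>PM (insert 1 J))
        = (\<integral>\<^sup>+ y. ennreal (U (x, y)) \<partial>PM J) * (\<integral>\<^sup>+ b. ennreal (K (x 2) b) \<partial>lborel)"
    proof (rule nn_integral_PiM_insert_factor[OF J])
      show "K (x 2) \<in> borel_measurable borel" using measurable_Pair2[OF K(1), of "x 2"] by simp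
      show "(\<lambda>y. U (x, y)) \<in> borel_measurable (PM J)" by (rule measurable_Pair2[OF U(2) x])
      show "(\<lambda>y. ennreal (K (x 2) (y 1) * U (x, y))) \<in> borel_measurable (PM (insert 1 J))"
        using measurable_Pair2[OF KU x] by simp
    qed (use K(2) U(3,4) in auto)
  qed
  also have "\<dots> = (\<integral>\<^sup>+ a. tail_marginal I J U a * (\<integral>\<^sup>+ b. ennreal (K a b) \<partial>lborel) \<partial>lborel)"
    unfolding tail_marginal_def
    using lborel.borel_measurable_nn_integral[of "\<lambda>a b. ennreal (K a b)" lborel] K(1)
    by (intro nn_integral_PiM_insert_coordinate[OF I(1,3) U_J]) simp
  finally show ?thesis .
qed

lemma tail_marginal_measurable:
  assumes "finite I" "2 \<notin> I" "finite J" and U: "U \<in> borel_measurable (PM (insert 2 I) \<Otimes>\<^sub>M PM J)"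
  shows "tail_marginal I J U \<in> borel_measurable borel"
proof -
  have "(\<lambda>x. \<integral>\<^sup>+ y. ennreal (U (x, y)) \<partial>PM J) \<in> borel_measurable (PM (insert 2 I))"
    using sigma_finite_measure.borel_measurable_nn_integral[OF lborel_product.sigma_finite[OF \<open>finite J\<close>],
        of "\<lambda>x y. ennreal (U (x, y))"] U by simp
  moreover have "(\<lambda>p. (snd p)(2 := fst p)) \<in> measurable (lborel \<Otimes>\<^sub>M PM I) (PM (insert 2 I))"
    by (rule measurable_fun_upd[where J=I]) auto
  ultimately have "(\<lambda>p. \<integral>\<^sup>+ y. ennreal (U ((snd p)(2 := fst p), y)) \<partial>PM J) \<in> borel_measurable (lborel \<Otimes>\<^sub>M PM I)"
    using measurable_comp by (simp add: o_def)
  then show ?thesis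
    using sigma_finite_measure.borel_measurable_nn_integral[OF lborel_product.sigma_finite[OF \<open>finite I\<close>],
        of "\<lambda>a x. \<integral>\<^sup>+ y. ennreal (U (x(2 := a), y)) \<partial>PM J" lborel]
    unfolding tail_marginal_def[abs_def] by (simp add: case_prod_beta)
qed

lemma tail_marginal_le:
  assumes "finite I" "2 \<notin> I" "finite J" "0 \<le> c"
    and bound: "\<And>x y. U (x, y) \<le> c * ((\<Prod>i\<in>I. indicator {0..1} (x i)) * (\<Prod>i\<in>J. indicator {0..1} (y i)))"
  shows "tail_marginal I J U a \<le> ennreal c"
proof -
  have "tail_marginal I J U a
      \<le> (\<integral>\<^sup>+ x. \<integral>\<^sup>+ y. ennreal (c * (\<Prod>i\<in>I. indicator {0..1} (x i))) * ennreal (\<Prod>i\<in>J. indicator {0..1} (y i)) \<partial>PM J \<partial>PM I)"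
    unfolding tail_marginal_def
  proof (intro nn_integral_mono)
    fix x y
    have "(\<Prod>i\<in>I. indicator {0..1} ((x(2 := a)) i)) = (\<Prod>i\<in>I. indicator {0..1} (x i) :: real)"
      using \<open>2 \<notin> I\<close> by (intro prod.cong) auto
    then show "ennreal (U (x(2 := a), y)) \<le> ennreal (c * (\<Prod>i\<in>I. indicator {0..1} (x i))) * ennreal (\<Prod>i\<in>J. indicator {0..1} (y i))"
      using bound[of "x(2 := a)" y] \<open>0 \<le> c\<close>
      by (simp add: ennreal_mult[symmetric] prod_nonneg ennreal_leI mult.assoc)
  qed
  also have "\<dots> = (\<integral>\<^sup>+ x. ennreal (c * (\<Prod>i\<in>I. indicator {0..1} (x i))) \<partial>PM I)"
    using unit_cube_indicator_measurable[of J J] nn_integral_unit_cube[OF \<open>finite J\<close>]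
    by (simp add: nn_integral_cmult)
  also have "\<dots> = ennreal c * (\<integral>\<^sup>+ x. ennreal (\<Prod>i\<in>I. indicator {0..1} (x i)) \<partial>PM I)"
    using \<open>0 \<le> c\<close> unit_cube_indicator_measurable[of I I]
    by (subst nn_integral_cmult[symmetric]) (auto intro!: nn_integral_cong simp: ennreal_mult prod_nonneg)
  also have "\<dots> = ennreal c" using nn_integral_unit_cube[OF \<open>finite I\<close>] by simp
  finally show ?thesis .
qed

lemma ennreal_enn2real_tail_marginal:
  assumes "finite I" "2 \<notin> I" "finite J" "0 \<le> c"
    and "\<And>x y. U (x, y) \<le> c * ((\<Prod>i\<in>I. indicator {0..1} (x i)) * (\<Prod>i\<in>J. indicator {0..1} (y i)))"
  shows "ennreal (enn2real (tail_marginal I J U a)) = tail_marginal I J U a"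
  using tail_marginal_le[OF assms] by (intro ennreal_enn2real le_less_trans[OF _ ennreal_less_top])

lemma tail_marginal_antitone:
  "(\<And>x y a b. a \<le> b \<Longrightarrow> U (x(2 := b), y) \<le> U (x(2 := a), y)) \<Longrightarrow> a \<le> b \<Longrightarrow> tail_marginal I J U b \<le> tail_marginal I J U a"
  unfolding tail_marginal_def by (intro nn_integral_mono ennreal_leI) auto

section \<open>The conditional density of \<open>X\<^sub>1\<close>\<close>

context tooth_pair
begin

lemma tooth_weight_coordinates_measurable:
  "i \<in> I \<Longrightarrow> j \<in> J \<Longrightarrow> (\<lambda>z. tooth_weight f g s (fst z i) (snd z j)) \<in> borel_measurable (PM I \<Otimes>\<^sub>M PM J)"
  using measurable_comp[OF measurable_Pair[of "\<lambda>z. fst z i" _ lborel "\<lambda>z. snd z j" lborel]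
      tooth_weight_borel_measurable[of s]]
  by (simp add: o_def)

lemma first_tooth_tail_marginal:
  assumes "finite I" "2 \<notin> I" "finite J" "0 \<le> c"
    and U: "U \<in> borel_measurable (PM (insert 2 I) \<Otimes>\<^sub>M PM J)"
      "\<And>x y a b. a \<le> b \<Longrightarrow> U (x(2 := b), y) \<le> U (x(2 := a), y)"
      "\<And>x y. U (x, y) \<le> c * ((\<Prod>i\<in>I. indicator {0..1} (x i)) * (\<Prod>i\<in>J. indicator {0..1} (y i)))"
  shows "first_tooth f g A (\<lambda>a. enn2real (tail_marginal I J U a)) c"
proof
  note finite = ennreal_enn2real_tail_marginal[OF assms(1-4) U(3), symmetric]
  show "(\<lambda>a. enn2real (tail_marginal I J U a)) \<in> borel_measurable borel"
    using tail_marginal_measurable[OF assms(1-3) U(1)] by measurable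
  show "0 \<le> enn2real (tail_marginal I J U x)" for x by simp
  show "enn2real (tail_marginal I J U x) \<le> c" for x
    using tail_marginal_le[OF assms(1-4) U(3), of x] \<open>0 \<le> c\<close> by (simp add: enn2real_leI)
  show "enn2real (tail_marginal I J U b) \<le> enn2real (tail_marginal I J U a)" if "a \<le> b" for a b
    using tail_marginal_antitone[of U, OF U(2) that, of I J] finite[of a] finite[of b]
    by (metis enn2real_nonneg ennreal_le_iff)
qed

theorem cond_density_derivative_bound:
  assumes I: "finite I" "1 \<notin> I" "2 \<notin> I" and J: "finite J" "1 \<notin> J"
    and W_factor: "\<And>t z. z \<in> space (PM (insert 2 I) \<Otimes>\<^sub>M PM (insert 1 J)) \<Longrightarrow>
        W ((fst z)(1 := t), snd z) = tooth_weight f g t (fst z 2) (snd z 1) * U z"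
    and W: "W \<in> borel_measurable (PM (insert 1 (insert 2 I)) \<Otimes>\<^sub>M PM (insert 1 J))" "\<And>z. 0 \<le> W z"
    and U: "U \<in> borel_measurable (PM (insert 2 I) \<Otimes>\<^sub>M PM (insert 1 J))"
      "\<And>x y v. U (x, y(1 := v)) = U (x, y)" "\<And>z. 0 \<le> U z"
      "\<And>x y a b. a \<le> b \<Longrightarrow> U (x(2 := b), y) \<le> U (x(2 := a), y)"
      "\<And>x y. U (x, y) \<le> c * ((\<Prod>i\<in>I. indicator {0..1} (x i)) * (\<Prod>i\<in>J. indicator {0..1} (y i)))"
    and "0 \<le> c" and t: "t \<in> {0..1}"
  shows "\<exists>D. ((\<lambda>t. (LINT z|(PM (insert 2 I) \<Otimes>\<^sub>M PM (insert 1 J)). W ((fst z)(1 := t), snd z))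
                  / (LINT z|(PM (insert 1 (insert 2 I)) \<Otimes>\<^sub>M PM (insert 1 J)). W z))
             has_real_derivative D) (at t within {0..1}) \<and> \<bar>D\<bar> \<le> 512 * A^5"
proof -
  have U_J: "U \<in> borel_measurable (PM (insert 2 I) \<Otimes>\<^sub>M PM J)"
    by (rule measurable_pair_PiM_fun_upd_invariant[OF U(1,2)])
  define S where "S a = enn2real (tail_marginal I J U a)" for a
  interpret first_tooth f g A S c
    unfolding S_def by (rule first_tooth_tail_marginal[OF I(1,3) J(1) \<open>0 \<le> c\<close> U_J U(4,5)])
  have "tail_marginal I J U a = ennreal (S a)" for a
    unfolding S_def by (rule ennreal_enn2real_tail_marginal[OF I(1,3) J(1) \<open>0 \<le> c\<close> U(5), symmetric])
  then have first_tooth: "(\<integral>\<^sup>+ z. ennreal (tooth_weight f g s (fst z 2) (snd z 1) * U z) \<partial>(PM (insert 2 I) \<Otimes>\<^sub>M PM (insert 1 J)))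
      = tooth_marginal f g S s" for s
    unfolding tooth_marginal_def
    using nn_integral_first_tooth[OF I J U(1) U_J U(2,3) tooth_weight_borel_measurable tooth_weight_nonneg] by simp
  have numerator: "(\<integral>\<^sup>+ z. ennreal (W ((fst z)(1 := s), snd z)) \<partial>(PM (insert 2 I) \<Otimes>\<^sub>M PM (insert 1 J)))
      = tooth_marginal f g S s" for s
    unfolding first_tooth[symmetric] by (intro nn_integral_cong arg_cong[where f=ennreal] W_factor)
  have "(LINT z|(PM (insert 2 I) \<Otimes>\<^sub>M PM (insert 1 J)). W ((fst z)(1 := s), snd z))
      = (LINT z|(PM (insert 2 I) \<Otimes>\<^sub>M PM (insert 1 J)). tooth_weight f g s (fst z 2) (snd z 1) * U z)" for s
    by (intro Bochner_Integration.integral_cong refl W_factor)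
  also have "\<dots> s = enn2real (tooth_marginal f g S s)" for s
    unfolding first_tooth[symmetric] using tooth_weight_nonneg U(1,3)
    by (intro integral_eq_nn_integral borel_measurable_times tooth_weight_coordinates_measurable) auto
  moreover have "(LINT z|(PM (insert 1 (insert 2 I)) \<Otimes>\<^sub>M PM (insert 1 J)). W z)
      = enn2real (\<integral>\<^sup>+ t. tooth_marginal f g S t \<partial>lborel)"
    using I J W by (simp add: integral_eq_nn_integral nn_integral_PiM_pair_insert numerator[symmetric])
  ultimately show ?thesis using tooth_marginal_density_derivative_bound[OF t] by simp
qed

end

locale sawtooth =
  fixes n :: nat and f g :: "nat \<Rightarrow> real \<Rightarrow> real"
  assumes two_le_n: "2 \<le> n" and admissible: "sawtooth_admissible n f g"
begin

abbreviation F :: "nat \<Rightarrow> real \<Rightarrow> real" where "F \<equiv> \<lambda>i. clamp01 (f i)"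
abbreviation G :: "nat \<Rightarrow> real \<Rightarrow> real" where "G \<equiv> \<lambda>i. clamp01 (g i)"

lemma admissibleD:
  assumes "i \<in> {1..n}"
  shows "mono_on {0..1} (f i)" "mono_on {0..1} (g i)" "\<forall>t\<in>{0..1}. 0 \<le> f i t" "\<forall>t\<in>{0..1}. 0 \<le> g i t"
    "C1_on01 (f i)" "C1_on01 (g i)"
  using admissible assms unfolding sawtooth_admissible_def by auto

lemma F_borel_measurable: "i \<in> {1..n} \<Longrightarrow> F i \<in> borel_measurable borel"
  and G_borel_measurable: "i \<in> {1..n} \<Longrightarrow> G i \<in> borel_measurable borel"
  using clamp01_borel_measurable C1_on01_continuous_on admissibleD(5,6) by blast+

lemma F_bounds: "i \<in> {1..n} \<Longrightarrow> 0 \<le> F i u \<and> F i u \<le> f i 1"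
  and G_bounds: "i \<in> {1..n} \<Longrightarrow> 0 \<le> G i u \<and> G i u \<le> g i 1"
  using clamp01_nonneg clamp01_le_at_1 admissibleD(1-4) by blast+

lemma F2_mono: "u \<le> v \<Longrightarrow> F 2 u \<le> F 2 v"
  using mono_clamp01[OF admissibleD(1)[of 2]] two_le_n by (simp add: mono_def)

definition tail_bound :: real where "tail_bound = (\<Prod>i\<in>{2..n}. f i 1 * g i 1)"

lemma tail_bound_nonneg: "0 \<le> tail_bound"
proof -
  have "0 \<le> f i 1" "0 \<le> g i 1" if "i \<in> {1..n}" for i
    using F_bounds[OF that, of 0] G_bounds[OF that, of 0] by linarith+
  then show ?thesis unfolding tail_bound_def by (intro prod_nonneg mult_nonneg_nonneg) auto
qed

lemma tail_weight_F_G_nonneg: "0 \<le> tail_weight n F G x y"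
  using F_bounds G_bounds by (intro tail_weight_nonneg) auto

lemma tail_weight_F_G_antitone: "a \<le> b \<Longrightarrow> tail_weight n F G (x(2 := b)) y \<le> tail_weight n F G (x(2 := a)) y"
  using F_bounds G_bounds by (intro tail_weight_antitone[where f=F and g=G, OF two_le_n F2_mono]) auto

lemma tail_weight_F_G_le:
  "tail_weight n F G x y \<le> tail_bound * ((\<Prod>i\<in>{3..n+1}. indicator {0..1} (x i)) * (\<Prod>i\<in>{2..n}. indicator {0..1} (y i)))"
  unfolding tail_bound_def using F_bounds G_bounds by (intro tail_weight_le) auto

lemma tail_weight_F_G_measurable:
  assumes "\<And>i. i \<in> {2..n+1} \<Longrightarrow> (\<lambda>w. X w i) \<in> borel_measurable M"
    and "\<And>i. i \<in> {2..n} \<Longrightarrow> (\<lambda>w. Y w i) \<in> borel_measurable M"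
  shows "(\<lambda>w. tail_weight n F G (X w) (Y w)) \<in> borel_measurable M"
  using assms F_borel_measurable G_borel_measurable by (intro tail_weight_measurable) auto

lemma saw_weight_split:
  "saw_weight n f g (x(1 := t)) y = tooth_weight (f 1) (g 1) t (x 2) (y 1) * tail_weight n F G x y"
  using saw_weight_first_tooth[of n F G x t y] two_le_n
  by (simp add: saw_weight_clamp01[of n f g] tooth_weight_clamp01[symmetric])

lemma admissible_saw_weight_measurable:
  assumes "\<And>i. i \<in> {1..n+1} \<Longrightarrow> (\<lambda>w. X w i) \<in> borel_measurable M"
    and "\<And>i. i \<in> {1..n} \<Longrightarrow> (\<lambda>w. Y w i) \<in> borel_measurable M"
  shows "(\<lambda>w. saw_weight n f g (X w) (Y w)) \<in> borel_measurable M"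
  unfolding saw_weight_clamp01[of n f g]
  using assms F_borel_measurable G_borel_measurable by (intro saw_weight_measurable) auto

lemma admissible_saw_weight_nonneg: "0 \<le> saw_weight n f g x y"
  unfolding saw_weight_clamp01[of n f g] using F_bounds G_bounds by (intro saw_weight_nonneg) auto

lemma lower_indices: "{1..n+1} = insert 1 (insert 2 {3..n+1})" "{2..n+1} = insert 2 {3..n+1}"
  using two_le_n by auto

lemma saw_rest_measurable:
  assumes "{3..n+1} \<subseteq> X" "{2..n} \<subseteq> Y"
  shows "saw_rest n \<in> measurable (PM X \<Otimes>\<^sub>M PM Y) (saw_rest_space n)"
  unfolding saw_rest_space_def saw_rest_def
  by (intro measurable_Pair measurable_compose[OF measurable_fst measurable_restrict_subset[OF assms(1)]]
      measurable_compose[OF measurable_snd measurable_restrict_subset[OF assms(2)]])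

subsection \<open>Conditioning on an event of \<open>\<sigma>(X\<^sub>3, \<dots>, X\<^sub>n\<^sub>+\<^sub>1, Y\<^sub>2, \<dots>, Y\<^sub>n)\<close>\<close>

definition event_weight :: "((nat \<Rightarrow> real) \<times> (nat \<Rightarrow> real)) set \<Rightarrow> (nat \<Rightarrow> real) \<times> (nat \<Rightarrow> real) \<Rightarrow> real" where
  "event_weight B z = saw_weight n f g (fst z) (snd z) * indicator (saw_event n B) z"

definition event_tail :: "((nat \<Rightarrow> real) \<times> (nat \<Rightarrow> real)) set \<Rightarrow> (nat \<Rightarrow> real) \<times> (nat \<Rightarrow> real) \<Rightarrow> real" where
  "event_tail B z = tail_weight n F G (fst z) (snd z) * indicator B (saw_rest n z)"

lemma upper_indices: "{1..n} = insert 1 {2..n}"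
  using two_le_n by auto

lemma saw_event_eq: "saw_event n B = saw_rest n -` B \<inter> space (PM {1..n+1} \<Otimes>\<^sub>M PM {1..n})"
  unfolding saw_event_def saw_base_def by auto

lemma saw_rest_fun_upd:
  "saw_rest n (x(1 := a), y) = saw_rest n (x, y)" "saw_rest n (x(2 := a), y) = saw_rest n (x, y)"
  "saw_rest n (x, y(1 := a)) = saw_rest n (x, y)"
  by (auto simp: saw_rest_def restrict_def)

lemma event_weight_nonneg: "0 \<le> event_weight B z"
  and event_tail_nonneg: "0 \<le> event_tail B z"
  unfolding event_weight_def event_tail_def using admissible_saw_weight_nonneg tail_weight_F_G_nonneg by simp_all

lemma event_tail_measurable:
  assumes "B \<in> sets (saw_rest_space n)"
  shows "event_tail B \<in> borel_measurable (PM (insert 2 {3..n+1}) \<Otimes>\<^sub>M PM (insert 1 {2..n}))"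
proof -
  have "(\<lambda>z. tail_weight n F G (fst z) (snd z)) \<in> borel_measurable (PM {2..n+1} \<Otimes>\<^sub>M PM {1..n})"
    by (intro tail_weight_F_G_measurable) auto
  moreover have "saw_rest n \<in> measurable (PM {2..n+1} \<Otimes>\<^sub>M PM {1..n}) (saw_rest_space n)"
    by (rule saw_rest_measurable) auto
  ultimately have "event_tail B \<in> borel_measurable (PM {2..n+1} \<Otimes>\<^sub>M PM {1..n})"
    unfolding event_tail_def[abs_def] using assms by measurable
  then show ?thesis unfolding lower_indices upper_indices .
qed

lemma event_weight_measurable:
  assumes "B \<in> sets (saw_rest_space n)"
  shows "event_weight B \<in> borel_measurable (PM (insert 1 (insert 2 {3..n+1})) \<Otimes>\<^sub>M PM (insert 1 {2..n}))"
proof -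
  have "saw_event n B \<in> sets (PM {1..n+1} \<Otimes>\<^sub>M PM {1..n})"
    unfolding saw_event_eq by (rule measurable_sets[OF saw_rest_measurable assms]) auto
  moreover have "(\<lambda>z. saw_weight n f g (fst z) (snd z)) \<in> borel_measurable (PM {1..n+1} \<Otimes>\<^sub>M PM {1..n})"
    by (intro admissible_saw_weight_measurable) auto
  ultimately have "event_weight B \<in> borel_measurable (PM {1..n+1} \<Otimes>\<^sub>M PM {1..n})"
    unfolding event_weight_def[abs_def] by measurable
  then show ?thesis unfolding lower_indices upper_indices .
qed

lemma event_weight_factor:
  assumes z: "z \<in> space (PM (insert 2 {3..n+1}) \<Otimes>\<^sub>M PM (insert 1 {2..n}))"
  shows "event_weight B ((fst z)(1 := s), snd z) = tooth_weight (f 1) (g 1) s (fst z 2) (snd z 1) * event_tail B z"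
proof -
  have "((fst z)(1 := s), snd z) \<in> space (PM {1..n+1} \<Otimes>\<^sub>M PM {1..n})"
    using z unfolding lower_indices upper_indices
    by (auto simp: space_pair_measure space_PiM intro!: PiE_fun_upd)
  then have "indicator (saw_event n B) ((fst z)(1 := s), snd z) = (indicator B (saw_rest n z) :: real)"
    using saw_rest_fun_upd(1)[of "fst z" s "snd z"] unfolding saw_event_eq by (simp add: indicator_def)
  then show ?thesis
    unfolding event_weight_def event_tail_def fst_conv snd_conv saw_weight_split by simp
qed

lemma event_tail_fun_upd_1: "event_tail B (x, y(1 := v)) = event_tail B (x, y)"
  by (simp only: event_tail_def fst_conv snd_conv tail_weight_fun_upd_1 saw_rest_fun_upd)

lemma event_tail_antitone: "a \<le> b \<Longrightarrow> event_tail B (x(2 := b), y) \<le> event_tail B (x(2 := a), y)"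
  using tail_weight_F_G_antitone by (simp add: event_tail_def saw_rest_fun_upd mult_right_mono)

lemma event_tail_le:
  "event_tail B (x, y) \<le> tail_bound * ((\<Prod>i\<in>{3..n+1}. indicator {0..1} (x i)) * (\<Prod>i\<in>{2..n}. indicator {0..1} (y i)))"
  using tail_weight_F_G_le[of x y] tail_weight_F_G_nonneg[of x y] by (auto simp: event_tail_def indicator_def)

theorem cond_dens_X1_derivative_bound:
  assumes "tooth_pair (f 1) (g 1) A" and B: "B \<in> sets (saw_rest_space n)" and t: "t \<in> {0..1}"
  shows "\<exists>D. (cond_dens_X1 n f g (saw_event n B) has_real_derivative D) (at t within {0..1}) \<and> \<bar>D\<bar> \<le> 512 * A^5"
proof -
  interpret tooth_pair "f 1" "g 1" A by fact
  have "cond_dens_X1 n f g (saw_event n B)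
      = (\<lambda>t. (LINT z|(PM (insert 2 {3..n+1}) \<Otimes>\<^sub>M PM (insert 1 {2..n})). event_weight B ((fst z)(1 := t), snd z))
           / (LINT z|(PM (insert 1 (insert 2 {3..n+1})) \<Otimes>\<^sub>M PM (insert 1 {2..n})). event_weight B z))"
    unfolding cond_dens_X1_def saw_base_def event_weight_def lower_indices upper_indices by simp
  then show ?thesis
    using cond_density_derivative_bound[OF _ _ _ _ _ event_weight_factor event_weight_measurable[OF B]
        event_weight_nonneg event_tail_measurable[OF B] event_tail_fun_upd_1 event_tail_nonneg
        event_tail_antitone event_tail_le tail_bound_nonneg t]
    by simp
qed

subsection \<open>Conditioning on \<open>Y\<^sub>2 = s\<close>\<close>

definition slice_weight :: "real \<Rightarrow> (nat \<Rightarrow> real) \<times> (nat \<Rightarrow> real) \<Rightarrow> real" where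
  "slice_weight s z = saw_weight n f g (fst z) ((snd z)(2 := s))"

definition slice_tail :: "real \<Rightarrow> (nat \<Rightarrow> real) \<times> (nat \<Rightarrow> real) \<Rightarrow> real" where
  "slice_tail s z = tail_weight n F G (fst z) ((snd z)(2 := s))"

lemma upper_indices_minus_2: "{1..n} - {2} = insert 1 {3..n}"
  using two_le_n by auto

lemma slice_weight_nonneg: "0 \<le> slice_weight s z"
  and slice_tail_nonneg: "0 \<le> slice_tail s z"
  unfolding slice_weight_def slice_tail_def using admissible_saw_weight_nonneg tail_weight_F_G_nonneg by simp_all

lemma slice_tail_measurable:
  "slice_tail s \<in> borel_measurable (PM (insert 2 {3..n+1}) \<Otimes>\<^sub>M PM (insert 1 {3..n}))"
proof -
  have "slice_tail s \<in> borel_measurable (PM {2..n+1} \<Otimes>\<^sub>M PM ({1..n} - {2}))"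
    unfolding slice_tail_def[abs_def]
    by (intro tail_weight_F_G_measurable measurable_fun_upd_snd_component) auto
  then show ?thesis unfolding lower_indices upper_indices_minus_2 .
qed

lemma slice_weight_measurable:
  "slice_weight s \<in> borel_measurable (PM (insert 1 (insert 2 {3..n+1})) \<Otimes>\<^sub>M PM (insert 1 {3..n}))"
proof -
  have "slice_weight s \<in> borel_measurable (PM {1..n+1} \<Otimes>\<^sub>M PM ({1..n} - {2}))"
    unfolding slice_weight_def[abs_def]
    by (intro admissible_saw_weight_measurable measurable_fun_upd_snd_component) auto
  then show ?thesis unfolding lower_indices upper_indices_minus_2 .
qed

lemma slice_weight_factor:
  "slice_weight s ((fst z)(1 := t), snd z) = tooth_weight (f 1) (g 1) t (fst z 2) (snd z 1) * slice_tail s z"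
  unfolding slice_weight_def slice_tail_def fst_conv snd_conv saw_weight_split by simp

lemma slice_tail_fun_upd_1: "slice_tail s (x, y(1 := v)) = slice_tail s (x, y)"
proof -
  have "(y(1 := v))(2 := s) = (y(2 := s))(1 := v)" by (rule fun_upd_twist) simp
  then show ?thesis by (simp only: slice_tail_def fst_conv snd_conv tail_weight_fun_upd_1)
qed

lemma slice_tail_antitone: "a \<le> b \<Longrightarrow> slice_tail s (x(2 := b), y) \<le> slice_tail s (x(2 := a), y)"
  unfolding slice_tail_def by (simp add: tail_weight_F_G_antitone)

lemma slice_tail_le:
  "slice_tail s (x, y) \<le> tail_bound * ((\<Prod>i\<in>{3..n+1}. indicator {0..1} (x i)) * (\<Prod>i\<in>{3..n}. indicator {0..1} (y i)))"
proof -
  have "(\<Prod>i\<in>{2..n}. indicator {0..1} ((y(2 := s)) i)) = indicator {0..1} s * (\<Prod>i\<in>{3..n}. indicator {0..1} (y i) :: real)"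
    using two_le_n by (subst prod.head) (auto intro!: prod.cong simp: Suc_le_eq numeral_2_eq_2)
  also have "\<dots> \<le> (\<Prod>i\<in>{3..n}. indicator {0..1} (y i))"
    by (simp add: indicator_def prod_nonneg)
  finally have "tail_bound * ((\<Prod>i\<in>{3..n+1}. indicator {0..1} (x i)) * (\<Prod>i\<in>{2..n}. indicator {0..1} ((y(2 := s)) i)))
      \<le> tail_bound * ((\<Prod>i\<in>{3..n+1}. indicator {0..1} (x i)) * (\<Prod>i\<in>{3..n}. indicator {0..1} (y i)))"
    using tail_bound_nonneg by (intro mult_left_mono) (auto simp: prod_nonneg)
  with tail_weight_F_G_le[of x "y(2 := s)"] show ?thesis unfolding slice_tail_def by simp
qed

theorem cond_dens_X1_Y2_derivative_bound:
  assumes "tooth_pair (f 1) (g 1) A" and t: "t \<in> {0..1}"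
  shows "\<exists>D. (cond_dens_X1_Y2 n f g s has_real_derivative D) (at t within {0..1}) \<and> \<bar>D\<bar> \<le> 512 * A^5"
proof -
  interpret tooth_pair "f 1" "g 1" A by fact
  have "cond_dens_X1_Y2 n f g s
      = (\<lambda>t. (LINT z|(PM (insert 2 {3..n+1}) \<Otimes>\<^sub>M PM (insert 1 {3..n})). slice_weight s ((fst z)(1 := t), snd z))
           / (LINT z|(PM (insert 1 (insert 2 {3..n+1})) \<Otimes>\<^sub>M PM (insert 1 {3..n})). slice_weight s z))"
    unfolding cond_dens_X1_Y2_def slice_weight_def lower_indices upper_indices_minus_2 by simp
  then show ?thesis
    using cond_density_derivative_bound[OF _ _ _ _ _ slice_weight_factor slice_weight_measurable
        slice_weight_nonneg slice_tail_measurable slice_tail_fun_upd_1 slice_tail_nonneg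
        slice_tail_antitone slice_tail_le tail_bound_nonneg t]
    by simp
qed

end

theorem mainTheorem11:
  fixes A :: real
  assumes "A > 0"
  shows "\<exists>R::real. \<forall>(n::nat) (f::nat \<Rightarrow> real \<Rightarrow> real) (g::nat \<Rightarrow> real \<Rightarrow> real).
     n \<ge> 2 \<and> sawtooth_admissible n f g
     \<and> integral {0..1} (f 1) = 1 \<and> integral {0..1} (g 1) = 1
     \<and> (\<forall>t\<in>{0..1}. \<bar>f 1 t\<bar> \<le> A \<and> \<bar>g 1 t\<bar> \<le> A)
     \<longrightarrow>
       (\<forall>B \<in> sets (saw_rest_space n).
          measure (saw_prob n f g) (saw_event n B) > 0 \<longrightarrow>
          (\<forall>t\<in>{0..1}. \<exists>D. (cond_dens_X1 n f g (saw_event n B) has_real_derivative D)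
                              (at t within {0..1}) \<and> \<bar>D\<bar> \<le> R))
     \<and> (\<forall>s\<in>{0<..1}.
          (\<forall>t\<in>{0..1}. \<exists>D. (cond_dens_X1_Y2 n f g s has_real_derivative D)
                              (at t within {0..1}) \<and> \<bar>D\<bar> \<le> R))"
proof (intro exI[of _ "512 * A^5"] allI impI, goal_cases)
  case (1 n f g)
  then interpret sawtooth n f g by unfold_locales auto
  from 1 have "tooth_pair (f 1) (g 1) A"
    using admissibleD[of 1] two_le_n by unfold_locales auto
  then show ?case using cond_dens_X1_derivative_bound cond_dens_X1_Y2_derivative_bound by blast
qed

end
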